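(* Fix an outcome $s$, vectors $\mathbf{q}^b,\mathbf{q}^p\in\mathbb{R}^N$ and a demand $\mathbf{d}_s\in\mathbb{R}^N$. Let $\mathbf{r}^p_s$ be an optimal solution of $FR(\mathbf{q}^b,\mathbf{q}^p,\mathbf{d}_s)$ and $(\mathbf{r}^{p\prime}_s,\boldsymbol\omega_s',\mathbf{v}_s',\boldsymbol\phi_s')$ an optimal solution of $FR'(\mathbf{q}^b,\mathbf{q}^p,\mathbf{d}_s)$. Then: (i) $\boldsymbol\omega_s'=0$; (ii) $\mathbf{r}^p_s=\mathbf{r}^{p\prime}_s$; (iii) $\mathbf{H}(\mathbf{q}^b+\mathbf{q}^p+\mathbf{r}^p_s-\mathbf{d}_s)=\mathbf{B}\mathbf{C}^\top\boldsymbol\phi_s'$. Moreover, there exist $\boldsymbol\theta_s'\in\mathbb{R}^N$ and $\mathbf{y}_s'\in\mathbb{R}^L$ with $\mathbf{C}\mathbf{y}_s'=0$ such that $\mathbf{v}_s'=\mathbf{B}\mathbf{C}^\top\boldsymbol\theta_s'+\mathbf{y}_s'$ and $\mathbf{B}\mathbf{C}^\top\boldsymbol\phi_s'=\mathbf{B}\mathbf{C}^\top\boldsymbol\theta_s'$. Finally, $(\mathbf{r}^{p\prime}_s,\boldsymbol\omega_s',\boldsymbol\theta_s',\boldsymbol\phi_s',\boldsymbol\pi_s^{p\prime},\underline{\boldsymbol\mu}_s',\bar{\boldsymbol\mu}_s')$ is an equilibrium point of the closed-loop dynamics described in the context if and only if $(\mathbf{r}^{p\prime}_s,\boldsymbol\omega_s',\mathbf{v}_s',\boldsymbol\phi_s',\boldsymbol\pi_s^{p\prime},\underline{\boldsymbol\mu}_s',\bar{\boldsymbol\mu}_s')$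 is a primal-dual optimal solution of $FR'$, where $\boldsymbol\omega_s'$, $\boldsymbol\pi_s^{p\prime}$ and $(\underline{\boldsymbol\mu}_s',\bar{\boldsymbol\mu}_s')$ are the Lagrange multipliers associated with constraints (b), (c) and (d) of $FR'$, respectively.
   Context: Network: connected directed graph with node set $N$ (also its cardinality) and link set $L$, incidence matrix $\mathbf{C}\in\mathbb{R}^{N\times L}$, $\mathbf{B}=\mathrm{diag}(B_l)$ with $B_l>0$, $\mathbf{L}=\mathbf{C}\mathbf{B}\mathbf{C}^\top$, $\mathbf{H}=\mathbf{B}\mathbf{C}^\top\mathbf{L}^\dagger$, line capacities $\mathbf{f}\in\mathbb{R}^L$, $\mathbf{1}$ the all-ones vector. At each node $n$ a regulation generator has capacity $[\underline{q}_n^p,\bar{q}_n^p]$ and strictly convex continuously differentiable cost $c_n^p$ of its total output; $c_n^{p\prime}$ is its derivative and $c_n^{p\prime-1}$ the inverse of the derivative. $\mathbf{D}=\mathrm{diag}(D_n)$ (damping, $D_n>0$), $\mathbf{M}=\mathrm{diag}(M_n)$ (inertia, $M_n>0$). $FR(\mathbf{q}^b,\mathbf{q}^p,\mathbf{d}_s)$: minimize $\sum_n c_n^p(q^p_n+r^p_{s,n})$ over $\mathbf{r}^p_s\in\mathbb{R}^N$ subject to $\underline{\mathbf{q}}^p\le\mathbf{q}^p+\mathbf{r}^p_s\le\bar{\mathbf{q}}^p$, $\mathbf{1}^\top(\mathbf{q}^b+\mathbf{q}^p+\mathbf{r}^p_s-\mathbf{d}_s)=0$, $-\mathbf{f}\le\mathbf{H}(\mathbf{q}^b+\mathbf{q}^p+\mathbf{r}^p_s-\mathbf{d}_s)\le\mathbf{f}$.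 $FR'(\mathbf{q}^b,\mathbf{q}^p,\mathbf{d}_s)$: minimize $\sum_n\big(c_n^p(q_n^p+r^p_{s,n})+D_n\omega_{s,n}^2/2\big)$ over $(\mathbf{r}^p_s,\boldsymbol\omega_s,\mathbf{v}_s,\boldsymbol\phi_s)\in\mathbb{R}^N\times\mathbb{R}^N\times\mathbb{R}^L\times\mathbb{R}^N$ subject to (b) $\mathbf{q}^b+\mathbf{q}^p+\mathbf{r}^p_s-\mathbf{d}_s-\mathbf{D}\boldsymbol\omega_s=\mathbf{C}\mathbf{v}_s$; (c) $\mathbf{q}^b+\mathbf{q}^p+\mathbf{r}^p_s-\mathbf{d}_s=\mathbf{L}\boldsymbol\phi_s$; (d) $-\mathbf{f}\le\mathbf{B}\mathbf{C}^\top\boldsymbol\phi_s\le\mathbf{f}$; (e) $\underline{\mathbf{q}}^p\le\mathbf{q}^p+\mathbf{r}^p_s\le\bar{\mathbf{q}}^p$. Closed-loop dynamics (time $t$, states $\boldsymbol\theta_s,\boldsymbol\omega_s,\boldsymbol\pi^p_s,\bar{\boldsymbol\mu}_s,\underline{\boldsymbol\mu}_s,\boldsymbol\phi_s$): $\dot{\boldsymbol\theta}_s=\boldsymbol\omega_s$; $\mathbf{M}\dot{\boldsymbol\omega}_s=\mathbf{q}^b+\mathbf{q}^p+\mathbf{r}^p_s(t)-\mathbf{d}_s-\mathbf{D}\boldsymbol\omega_s-\mathbf{L}\boldsymbol\theta_s$; $r^p_{s,n}(t)=\big[c_n^{p\prime-1}(-\omega_{s,n}(t)-\pi^p_{s,n}(t))-q^p_n\big]_{\underline{q}_n^p-q_n^p}^{\bar{q}_n^p-q_n^p}$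 where $[x]_a^b$ is the projection (clamp) of $x$ onto $[a,b]$; $\dot{\boldsymbol\pi}^p_s=\boldsymbol\zeta^\pi(\mathbf{q}^b+\mathbf{q}^p+\mathbf{r}^p_s(t)-\mathbf{d}_s-\mathbf{L}\boldsymbol\phi_s)$; $\dot{\bar{\boldsymbol\mu}}_s=\boldsymbol\zeta^{\bar\mu}[\mathbf{B}\mathbf{C}^\top\boldsymbol\phi_s-\mathbf{f}]^+_{\bar{\boldsymbol\mu}_s}$; $\dot{\underline{\boldsymbol\mu}}_s=\boldsymbol\zeta^{\underline\mu}[-\mathbf{f}-\mathbf{B}\mathbf{C}^\top\boldsymbol\phi_s]^+_{\underline{\boldsymbol\mu}_s}$; $\dot{\boldsymbol\phi}_s=\boldsymbol\chi^\phi(\mathbf{L}\boldsymbol\pi^p_s-\mathbf{C}\mathbf{B}(\bar{\boldsymbol\mu}_s-\underline{\boldsymbol\mu}_s))$. Here $\boldsymbol\zeta^\pi,\boldsymbol\chi^\phi\in\mathbb{R}^{N\times N}$ and $\boldsymbol\zeta^{\bar\mu},\boldsymbol\zeta^{\underline\mu}\in\mathbb{R}^{L\times L}$ are diagonal gain matrices, and $[\mathbf{y}]^+_{\mathbf{x}}$ is taken elementwise with $[y]^+_x=0$ if $x=0$ and $y<0$, and $[y]^+_x=y$ otherwise. *)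

theory Defs
  imports "HOL-Analysis.Analysis"
begin

definition diag_mat :: "real^'a \<Rightarrow> real^'a^'a" where
  "diag_mat v = (\<chi> i j. if i = j then v$i else 0)"

definition pinv :: "real^'m^'n \<Rightarrow> real^'n^'m" where
  "pinv A = (THE X. A ** X ** A = A \<and> X ** A ** X = X \<and>
                    transpose (A ** X) = A ** X \<and> transpose (X ** A) = X ** A)"

definition clamp :: "real \<Rightarrow> real \<Rightarrow> real \<Rightarrow> real" where
  "clamp a b x = max a (min b x)"

definition proj_plus :: "real^'a \<Rightarrow> real^'a \<Rightarrow> real^'a" where
  "proj_plus x y = (\<chi> i. if x$i = 0 \<and> y$i < 0 then 0 else y$i)"

definition strictly_convex :: "(real \<Rightarrow> real) \<Rightarrow> bool" where
  "strictly_convex g \<longleftrightarrow> (\<forall>x y t. x \<noteq> y \<and> 0 < t \<and> t < 1 \<longrightarrow>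
      g ((1 - t) * x + t * y) < (1 - t) * g x + t * g y)"

text \<open>Directed graph: links 'l, each link l goes from node src l to node dst l.\<close>
definition incidence :: "('l \<Rightarrow> 'n) \<Rightarrow> ('l \<Rightarrow> 'n) \<Rightarrow> real^'l^'n" where
  "incidence src dst = (\<chi> n l. if n = src l then 1 else if n = dst l then -1 else 0)"

definition graph_connected :: "('l \<Rightarrow> 'n) \<Rightarrow> ('l \<Rightarrow> 'n) \<Rightarrow> bool" where
  "graph_connected src dst \<longleftrightarrow>
     (\<forall>a b. (a, b) \<in> {(x, y). \<exists>l. (x = src l \<and> y = dst l) \<or> (x = dst l \<and> y = src l)}\<^sup>*)"

definition laplacian :: "('l \<Rightarrow> 'n) \<Rightarrow> ('l \<Rightarrow> 'n) \<Rightarrow> real^'l \<Rightarrow> real^'n^'n" where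
  "laplacian src dst B = incidence src dst ** diag_mat B ** transpose (incidence src dst)"

definition ptdf :: "('l \<Rightarrow> 'n) \<Rightarrow> ('l \<Rightarrow> 'n) \<Rightarrow> real^'l \<Rightarrow> real^'n^'l" where
  "ptdf src dst B = diag_mat B ** transpose (incidence src dst) ** pinv (laplacian src dst B)"

text \<open>B C^T (line flows from angles)\<close>
definition flowmat :: "('l \<Rightarrow> 'n) \<Rightarrow> ('l \<Rightarrow> 'n) \<Rightarrow> real^'l \<Rightarrow> real^'n^'l" where
  "flowmat src dst B = diag_mat B ** transpose (incidence src dst)"

definition FR_feasible ::
  "('l \<Rightarrow> 'n) \<Rightarrow> ('l \<Rightarrow> 'n) \<Rightarrow> real^'l \<Rightarrow> real^'l \<Rightarrow> real^'n \<Rightarrow> real^'n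
   \<Rightarrow> real^'n \<Rightarrow> real^'n \<Rightarrow> real^'n \<Rightarrow> real^'n \<Rightarrow> bool" where
  "FR_feasible src dst B f qlo qhi qb qp d r \<longleftrightarrow>
     (\<forall>n. qlo$n \<le> qp$n + r$n \<and> qp$n + r$n \<le> qhi$n) \<and>
     (\<Sum>n\<in>UNIV. (qb + qp + r - d)$n) = 0 \<and>
     (\<forall>l. - f$l \<le> (ptdf src dst B *v (qb + qp + r - d))$l \<and>
          (ptdf src dst B *v (qb + qp + r - d))$l \<le> f$l)"

definition gen_cost :: "('n \<Rightarrow> real \<Rightarrow> real) \<Rightarrow> real^'n \<Rightarrow> real^'n \<Rightarrow> real" where
  "gen_cost c qp r = (\<Sum>n\<in>UNIV. c n (qp$n + r$n))"

definition FR_optimal ::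
  "('n \<Rightarrow> real \<Rightarrow> real) \<Rightarrow> ('l \<Rightarrow> 'n) \<Rightarrow> ('l \<Rightarrow> 'n) \<Rightarrow> real^'l \<Rightarrow> real^'l \<Rightarrow> real^'n \<Rightarrow> real^'n
   \<Rightarrow> real^'n \<Rightarrow> real^'n \<Rightarrow> real^'n \<Rightarrow> real^'n \<Rightarrow> bool" where
  "FR_optimal c src dst B f qlo qhi qb qp d r \<longleftrightarrow>
     FR_feasible src dst B f qlo qhi qb qp d r \<and>
     (\<forall>r'. FR_feasible src dst B f qlo qhi qb qp d r' \<longrightarrow> gen_cost c qp r \<le> gen_cost c qp r')"

definition FRp_obj :: "('n \<Rightarrow> real \<Rightarrow> real) \<Rightarrow> real^'n \<Rightarrow> real^'n \<Rightarrow> real^'n \<Rightarrow> real^'n \<Rightarrow> real" where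
  "FRp_obj c D qp r \<omega> = (\<Sum>n\<in>UNIV. c n (qp$n + r$n) + D$n * (\<omega>$n)\<^sup>2 / 2)"

text \<open>Constraint (e) only\<close>
definition box_ok :: "real^'n \<Rightarrow> real^'n \<Rightarrow> real^'n \<Rightarrow> real^'n \<Rightarrow> bool" where
  "box_ok qlo qhi qp r \<longleftrightarrow> (\<forall>n. qlo$n \<le> qp$n + r$n \<and> qp$n + r$n \<le> qhi$n)"

definition FRp_feasible ::
  "('l \<Rightarrow> 'n) \<Rightarrow> ('l \<Rightarrow> 'n) \<Rightarrow> real^'l \<Rightarrow> real^'n \<Rightarrow> real^'l \<Rightarrow> real^'n \<Rightarrow> real^'n
   \<Rightarrow> real^'n \<Rightarrow> real^'n \<Rightarrow> real^'n
   \<Rightarrow> real^'n \<Rightarrow> real^'n \<Rightarrow> real^'l \<Rightarrow> real^'n \<Rightarrow> bool" where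
  "FRp_feasible src dst B D f qlo qhi qb qp d r \<omega> v \<phi> \<longleftrightarrow>
     qb + qp + r - d - diag_mat D *v \<omega> = incidence src dst *v v \<and>
     qb + qp + r - d = laplacian src dst B *v \<phi> \<and>
     (\<forall>l. - f$l \<le> (flowmat src dst B *v \<phi>)$l \<and> (flowmat src dst B *v \<phi>)$l \<le> f$l) \<and>
     box_ok qlo qhi qp r"

definition FRp_optimal ::
  "('n \<Rightarrow> real \<Rightarrow> real) \<Rightarrow> ('l \<Rightarrow> 'n) \<Rightarrow> ('l \<Rightarrow> 'n) \<Rightarrow> real^'l \<Rightarrow> real^'n \<Rightarrow> real^'l
   \<Rightarrow> real^'n \<Rightarrow> real^'n \<Rightarrow> real^'n \<Rightarrow> real^'n \<Rightarrow> real^'n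
   \<Rightarrow> real^'n \<Rightarrow> real^'n \<Rightarrow> real^'l \<Rightarrow> real^'n \<Rightarrow> bool" where
  "FRp_optimal c src dst B D f qlo qhi qb qp d r \<omega> v \<phi> \<longleftrightarrow>
     FRp_feasible src dst B D f qlo qhi qb qp d r \<omega> v \<phi> \<and>
     (\<forall>r' \<omega>' v' \<phi>'. FRp_feasible src dst B D f qlo qhi qb qp d r' \<omega>' v' \<phi>' \<longrightarrow>
        FRp_obj c D qp r \<omega> \<le> FRp_obj c D qp r' \<omega>')"

text \<open>Lagrangian of FR' dualizing (b) with multiplier lam, (c) with pi, and (d) with
  mubar (upper bound) and mulow (lower bound); constraint (e) is kept as the domain.\<close>
definition FRp_lagrangian ::
  "('n \<Rightarrow> real \<Rightarrow> real) \<Rightarrow> ('l \<Rightarrow> 'n) \<Rightarrow> ('l \<Rightarrow> 'n) \<Rightarrow> real^'l \<Rightarrow> real^'n \<Rightarrow> real^'l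
   \<Rightarrow> real^'n \<Rightarrow> real^'n \<Rightarrow> real^'n
   \<Rightarrow> real^'n \<Rightarrow> real^'n \<Rightarrow> real^'l \<Rightarrow> real^'n
   \<Rightarrow> real^'n \<Rightarrow> real^'n \<Rightarrow> real^'l \<Rightarrow> real^'l \<Rightarrow> real" where
  "FRp_lagrangian c src dst B D f qb qp d r \<omega> v \<phi> lam \<pi> mulow mubar =
     FRp_obj c D qp r \<omega>
     + lam \<bullet> (qb + qp + r - d - diag_mat D *v \<omega> - incidence src dst *v v)
     + \<pi> \<bullet> (qb + qp + r - d - laplacian src dst B *v \<phi>)
     + mubar \<bullet> (flowmat src dst B *v \<phi> - f)
     + mulow \<bullet> (- f - flowmat src dst B *v \<phi>)"

definition FRp_dual ::
  "('n \<Rightarrow> real \<Rightarrow> real) \<Rightarrow> ('l \<Rightarrow> 'n) \<Rightarrow> ('l \<Rightarrow> 'n) \<Rightarrow> real^'l \<Rightarrow> real^'n \<Rightarrow> real^'l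
   \<Rightarrow> real^'n \<Rightarrow> real^'n \<Rightarrow> real^'n \<Rightarrow> real^'n \<Rightarrow> real^'n
   \<Rightarrow> real^'n \<Rightarrow> real^'n \<Rightarrow> real^'l \<Rightarrow> real^'l \<Rightarrow> ereal" where
  "FRp_dual c src dst B D f qlo qhi qb qp d lam \<pi> mulow mubar =
     (INF x \<in> {(r, \<omega>, v, \<phi>). box_ok qlo qhi qp r}.
        ereal (case x of (r, \<omega>, v, \<phi>) \<Rightarrow>
          FRp_lagrangian c src dst B D f qb qp d r \<omega> v \<phi> lam \<pi> mulow mubar))"

definition dual_feasible :: "real^'l \<Rightarrow> real^'l \<Rightarrow> bool" where
  "dual_feasible mulow mubar \<longleftrightarrow> (\<forall>l. 0 \<le> mulow$l \<and> 0 \<le> mubar$l)"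

text \<open>Primal-dual optimal solution of FR': (r, omega, v, phi) primal optimal and
  (omega, pi, mulow, mubar) dual optimal, omega being the multiplier of (b).\<close>
definition FRp_primal_dual_optimal ::
  "('n \<Rightarrow> real \<Rightarrow> real) \<Rightarrow> ('l \<Rightarrow> 'n) \<Rightarrow> ('l \<Rightarrow> 'n) \<Rightarrow> real^'l \<Rightarrow> real^'n \<Rightarrow> real^'l
   \<Rightarrow> real^'n \<Rightarrow> real^'n \<Rightarrow> real^'n \<Rightarrow> real^'n \<Rightarrow> real^'n
   \<Rightarrow> real^'n \<Rightarrow> real^'n \<Rightarrow> real^'l \<Rightarrow> real^'n
   \<Rightarrow> real^'n \<Rightarrow> real^'l \<Rightarrow> real^'l \<Rightarrow> bool" where
  "FRp_primal_dual_optimal c src dst B D f qlo qhi qb qp d r \<omega> v \<phi> \<pi> mulow mubar \<longleftrightarrow>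
     FRp_optimal c src dst B D f qlo qhi qb qp d r \<omega> v \<phi> \<and>
     dual_feasible mulow mubar \<and>
     (\<forall>lam' \<pi>' mulow' mubar'. dual_feasible mulow' mubar' \<longrightarrow>
        FRp_dual c src dst B D f qlo qhi qb qp d lam' \<pi>' mulow' mubar'
          \<le> FRp_dual c src dst B D f qlo qhi qb qp d \<omega> \<pi> mulow mubar)"

definition control_law ::
  "('n \<Rightarrow> real \<Rightarrow> real) \<Rightarrow> real^'n \<Rightarrow> real^'n \<Rightarrow> real^'n \<Rightarrow> real^'n \<Rightarrow> real^'n \<Rightarrow> real^'n" where
  "control_law c qlo qhi qp \<omega> \<pi> =
     (\<chi> n. clamp (qlo$n - qp$n) (qhi$n - qp$n)
                  (inv (deriv (c n)) (- \<omega>$n - \<pi>$n) - qp$n))"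

text \<open>Equilibrium: r equals the control law, every time derivative of the closed loop vanishes,
  and the multiplier states lie in their (nonnegative) state space.\<close>
definition cl_equilibrium ::
  "('n \<Rightarrow> real \<Rightarrow> real) \<Rightarrow> ('l \<Rightarrow> 'n) \<Rightarrow> ('l \<Rightarrow> 'n) \<Rightarrow> real^'l \<Rightarrow> real^'n \<Rightarrow> real^'n \<Rightarrow> real^'l
   \<Rightarrow> real^'n \<Rightarrow> real^'n
   \<Rightarrow> real^'n \<Rightarrow> real^'n \<Rightarrow> real^'l \<Rightarrow> real^'l
   \<Rightarrow> real^'n \<Rightarrow> real^'n \<Rightarrow> real^'n
   \<Rightarrow> real^'n \<Rightarrow> real^'n \<Rightarrow> real^'n \<Rightarrow> real^'n \<Rightarrow> real^'n \<Rightarrow> real^'l \<Rightarrow> real^'l \<Rightarrow> bool" where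
  "cl_equilibrium c src dst B D M f qlo qhi zeta_pi chi_phi zeta_mubar zeta_mulow qb qp d
       r \<omega> \<theta> \<phi> \<pi> mulow mubar \<longleftrightarrow>
     r = control_law c qlo qhi qp \<omega> \<pi> \<and>
     dual_feasible mulow mubar \<and>
     \<omega> = 0 \<and>
     (\<chi> n. (qb + qp + r - d - diag_mat D *v \<omega> - laplacian src dst B *v \<theta>)$n / M$n) = 0 \<and>
     diag_mat zeta_pi *v (qb + qp + r - d - laplacian src dst B *v \<phi>) = 0 \<and>
     diag_mat zeta_mubar *v proj_plus mubar (flowmat src dst B *v \<phi> - f) = 0 \<and>
     diag_mat zeta_mulow *v proj_plus mulow (- f - flowmat src dst B *v \<phi>) = 0 \<and>
     diag_mat chi_phi *v (laplacian src dst B *v \<pi>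
        - (incidence src dst ** diag_mat B) *v (mubar - mulow)) = 0"

end

theory Submission imports Defs begin

text \<open>
  Any FR'-feasible point stays feasible and does not get costlier when \<open>\<omega>\<close> is replaced by \<open>0\<close> and
  \<open>v\<close> by \<open>B C\<^sup>T \<phi>\<close>, so \<open>\<omega>' = 0\<close> because \<open>D > 0\<close>. On a connected network
  \<open>L L\<^sup>\<dagger> = L\<^sup>\<dagger> L = I - 1 1\<^sup>T/N\<close>, so \<open>H p = B C\<^sup>T \<phi>\<close> whenever \<open>p = L \<phi>\<close>, and every balanced injection is of this form: FR and FR'
  have the same feasible dispatches with the same line flows, and strict convexity of the costs
  makes their optimal dispatches equal. Taking \<open>\<theta>' = \<phi>'\<close>, constraint (b) leaves a circulation
  \<open>y' = v' - B C\<^sup>T \<phi>'\<close>.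

  For the last claim both sides reduce to the KKT conditions of FR' at the optimum: stationarity in
  \<open>\<phi>\<close>, i.e. \<open>L \<pi> = C B (mubar - mulow)\<close>; minimality of \<open>c\<^sub>n(q\<^sub>n + r\<^sub>n) + \<pi>\<^sub>n r\<^sub>n\<close> over the
  generation box, which by strict convexity is the clamped control law; and complementary slackness for the flow limits,
  which is exactly when the projected multiplier dynamics rest. KKT multipliers bound the dual from
  below by the optimal cost, and conversely a dual optimum must satisfy KKT, as seen by evaluating the
  Lagrangian at perturbations of the primal optimum; multipliers exist by Farkas' lemma, FR' being a
  linearly constrained problem in \<open>(r, \<phi>)\<close>.
\<close>

section \<open>Strictly convex functions of one variable\<close>

lemma strictly_convex_midpoint:
  assumes "strictly_convex g" "x \<noteq> y"
  shows "g ((x + y) / 2) < (g x + g y) / 2"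
proof -
  have "g ((1 - 1/2) * x + (1/2) * y) < (1 - 1/2) * g x + (1/2) * g y"
    using assms unfolding strictly_convex_def
    by (metis field_sum_of_halves half_gt_zero_iff less_add_same_cancel2 zero_less_one)
  then show ?thesis
    by (simp add: field_simps)
qed

lemma strictly_convex_imp_convex_on:
  assumes "strictly_convex g"
  shows "convex_on UNIV g"
proof (rule convex_onI)
  fix t x y :: real
  assume "0 < t" "t < 1"
  then show "g ((1 - t) *\<^sub>R x + t *\<^sub>R y) \<le> (1 - t) * g x + t * g y"
    using assms unfolding strictly_convex_def
    by (cases "x = y") (simp add: algebra_simps, simp add: less_imp_le)
qed simp

lemma C1_differentiable_on_UNIV_has_derivative:
  "g C1_differentiable_on UNIV \<Longrightarrow> (g has_real_derivative deriv g x) (at x)"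
  using C1_differentiable_on_eq DERIV_deriv_iff_real_differentiable by blast

lemma convex_on_UNIV_above_tangent:
  assumes "convex_on UNIV g" "(g has_real_derivative g') (at x)"
  shows "g x + g' * (y - x) \<le> g y"
  using convex_on_imp_above_tangent[of UNIV g x y g'] assms by simp

lemma strictly_convex_affine_comp:
  assumes "strictly_convex g" "a \<noteq> 0"
  shows "strictly_convex (\<lambda>x. g (a * x + b))"
  unfolding strictly_convex_def
proof (intro allI impI)
  fix x y t :: real
  assume "x \<noteq> y \<and> 0 < t \<and> t < 1"
  then have "g ((1 - t) * (a * x + b) + t * (a * y + b)) < (1 - t) * g (a * x + b) + t * g (a * y + b)"
    using assms unfolding strictly_convex_def by simp
  moreover have "(1 - t) * (a * x + b) + t * (a * y + b) = a * ((1 - t) * x + t * y) + b"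
    by (simp add: algebra_simps)
  ultimately show "g (a * ((1 - t) * x + t * y) + b) < (1 - t) * g (a * x + b) + t * g (a * y + b)"
    by simp
qed

lemma strictly_convex_add_linear: "strictly_convex g \<Longrightarrow> strictly_convex (\<lambda>x. g x + p * x)"
  unfolding strictly_convex_def
proof (intro allI impI)
  fix x y t :: real
  assume "\<forall>x y t. x \<noteq> y \<and> 0 < t \<and> t < 1 \<longrightarrow> g ((1 - t) * x + t * y) < (1 - t) * g x + t * g y"
    and "x \<noteq> y \<and> 0 < t \<and> t < 1"
  then have "g ((1 - t) * x + t * y) < (1 - t) * g x + t * g y"
    by blast
  then show "g ((1 - t) * x + t * y) + p * ((1 - t) * x + t * y)
      < (1 - t) * (g x + p * x) + t * (g y + p * y)"
    by (simp add: algebra_simps)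
qed

lemma strictly_convex_strict_mono_right_of_min:
  assumes sc: "strictly_convex h" and min: "\<forall>t. h x0 \<le> h t" and yz: "x0 \<le> y" "y < z"
  shows "h y < h z"
proof (cases "y = x0")
  case True
  have "h x0 \<le> h ((x0 + z) / 2)"
    using min by blast
  also have "\<dots> < (h x0 + h z) / 2"
    using strictly_convex_midpoint[OF sc] yz True by simp
  finally show ?thesis
    using True by simp
next
  case False
  define t where "t = (y - x0) / (z - x0)"
  have t: "0 < t" "t < 1"
    using False yz unfolding t_def by (auto simp: field_simps)
  have "t * (z - x0) = y - x0"
    using yz unfolding t_def by simp
  then have y: "y = (1 - t) * x0 + t * z"
    by (simp add: algebra_simps)
  have "h y < (1 - t) * h x0 + t * h z"
    using sc t yz unfolding y strictly_convex_def by simp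
  also have "\<dots> \<le> (1 - t) * h z + t * h z"
    using min t by (simp add: mult_left_mono)
  also have "\<dots> = h z"
    by (simp add: algebra_simps)
  finally show ?thesis .
qed

lemma strictly_convex_strict_antimono_left_of_min:
  assumes sc: "strictly_convex h" and min: "\<forall>t. h x0 \<le> h t" and yz: "y \<le> x0" "z < y"
  shows "h y < h z"
  using strictly_convex_strict_mono_right_of_min[OF strictly_convex_affine_comp[OF sc, of "-1" 0],
      of "- x0" "- y" "- z"] min yz by simp

lemma clamp_mem: "a \<le> b \<Longrightarrow> clamp a b x \<in> {a..b}"
  by (auto simp: clamp_def)

lemma strictly_convex_clamp_min_less:
  assumes sc: "strictly_convex h" and min: "\<forall>t. h x0 \<le> h t" and ab: "a \<le> b"
    and t: "t \<in> {a..b}" "t \<noteq> clamp a b x0"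
  shows "h (clamp a b x0) < h t"
proof -
  consider "x0 < a" | "b < x0" | "a \<le> x0" "x0 \<le> b"
    by linarith
  then show ?thesis
  proof cases
    case 1
    then show ?thesis
      using strictly_convex_strict_mono_right_of_min[OF sc min, of a t] ab t by (auto simp: clamp_def)
  next
    case 2
    then show ?thesis
      using strictly_convex_strict_antimono_left_of_min[OF sc min, of b t] ab t by (auto simp: clamp_def)
  next
    case 3
    then have x0: "clamp a b x0 = x0"
      by (simp add: clamp_def)
    then consider "t < x0" | "x0 < t"
      using t by fastforce
    then show ?thesis
      using strictly_convex_strict_mono_right_of_min[OF sc min, of x0 t]
        strictly_convex_strict_antimono_left_of_min[OF sc min, of x0 t] unfolding x0 by cases auto
  qed
qed

lemma strictly_convex_argmin_interval_iff:
  assumes sc: "strictly_convex h" and min: "\<forall>t. h x0 \<le> h t" and ab: "a \<le> b"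
  shows "(s \<in> {a..b} \<and> (\<forall>t\<in>{a..b}. h s \<le> h t)) \<longleftrightarrow> s = clamp a b x0"
proof
  assume s: "s \<in> {a..b} \<and> (\<forall>t\<in>{a..b}. h s \<le> h t)"
  show "s = clamp a b x0"
  proof (rule ccontr)
    assume "s \<noteq> clamp a b x0"
    then have "h (clamp a b x0) < h s"
      using strictly_convex_clamp_min_less[OF sc min ab] s by blast
    moreover have "h s \<le> h (clamp a b x0)"
      using s clamp_mem[OF ab] by blast
    ultimately show False
      by simp
  qed
qed (use strictly_convex_clamp_min_less[OF sc min ab] clamp_mem[OF ab] in \<open>fastforce intro: less_imp_le\<close>)

lemma argmin_interval_eq_clamp_inv_deriv:
  assumes sc: "strictly_convex g" and C1: "g C1_differentiable_on UNIV" and surj: "surj (deriv g)"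
    and "lo \<le> hi"
  shows "(x \<in> {lo - q..hi - q} \<and> (\<forall>t\<in>{lo - q..hi - q}. g (q + x) + p * x \<le> g (q + t) + p * t))
         \<longleftrightarrow> x = clamp (lo - q) (hi - q) (inv (deriv g) (- p) - q)"
proof -
  define x0 where "x0 = inv (deriv g) (- p) - q"
  have "deriv g (q + x0) = - p"
    unfolding x0_def using surj by (simp add: surj_f_inv_f)
  moreover have "g (q + x0) + deriv g (q + x0) * ((q + t) - (q + x0)) \<le> g (q + t)" for t
    by (rule convex_on_UNIV_above_tangent[OF strictly_convex_imp_convex_on[OF sc]
        C1_differentiable_on_UNIV_has_derivative[OF C1]])
  ultimately have "\<forall>t. g (q + x0) + p * x0 \<le> g (q + t) + p * t"
    by (simp add: algebra_simps)
  moreover have "strictly_convex (\<lambda>t. g (q + t) + p * t)"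
    using strictly_convex_add_linear[OF strictly_convex_affine_comp[OF sc, of 1 q]]
    by (simp add: add.commute)
  ultimately show ?thesis
    using strictly_convex_argmin_interval_iff[of "\<lambda>t. g (q + t) + p * t" x0 "lo - q" "hi - q" x]
      \<open>lo \<le> hi\<close> unfolding x0_def by simp
qed

text \<open>Complementary slackness for the interval \<open>{a..b}\<close> with multipliers \<open>l1, l2\<close> makes the tangent
  inequality a minimality statement.\<close>
lemma convex_interval_multipliers_imp_min:
  assumes "convex_on UNIV g" "(g has_real_derivative l1 - l2 - p) (at (q + x))"
    and "0 \<le> l1" "0 \<le> l2" "l1 * (x - a) = 0" "l2 * (b - x) = 0" and t: "t \<in> {a..b}"
  shows "g (q + x) + p * x \<le> g (q + t) + p * t"
proof -
  have "g (q + x) + (l1 - l2 - p) * ((q + t) - (q + x)) \<le> g (q + t)"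
    using convex_on_UNIV_above_tangent assms(1,2) .
  moreover have "(l1 - l2 - p) * ((q + t) - (q + x)) = l1 * t - l1 * x - l2 * t + l2 * x - p * t + p * x"
    by (simp add: algebra_simps)
  moreover have "0 \<le> l1 * t - l1 * a" "0 \<le> l2 * b - l2 * t"
    using assms(3,4) t by (simp_all flip: right_diff_distrib)
  moreover have "l1 * x = l1 * a" "l2 * x = l2 * b"
    using assms(5,6) by (auto simp: right_diff_distrib)
  ultimately show ?thesis
    by linarith
qed

section \<open>Incidence matrix and Laplacian\<close>

lemma diag_mat_vector_mult: "diag_mat v *v x = (\<chi> i. v$i * x$i)"
  by (simp add: diag_mat_def matrix_vector_mult_def vec_eq_iff if_distrib[of "\<lambda>a. a * _"]
      cong: if_cong)

lemma transpose_diag_mat [simp]: "transpose (diag_mat v) = diag_mat v"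
  by (simp add: diag_mat_def transpose_def vec_eq_iff)

lemma diag_mat_vector_mult_eq_0_iff:
  "\<forall>i. 0 < z$i \<Longrightarrow> diag_mat z *v x = 0 \<longleftrightarrow> x = 0"
  by (auto simp: diag_mat_vector_mult vec_eq_iff) (metis less_irrefl)

lemma inner_matrix_vector_mult: "(A *v y) \<bullet> x = y \<bullet> ((x::real^'n) v* A)"
  by (metis dot_lmul_matrix inner_commute)

lemma vector_incidence_mult_nth:
  "src l \<noteq> dst l \<Longrightarrow> (x v* incidence src dst) $ l = x$(src l) - x$(dst l)"
  by (simp add: vector_matrix_mult_def incidence_def if_distrib if_distrib[of "\<lambda>t. _ * t"]
      sum.If_cases)

lemma sum_incidence_mult_eq_0:
  assumes "\<forall>l. src l \<noteq> dst l"
  shows "(\<Sum>n\<in>UNIV. (incidence src dst *v y) $ n) = 0"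
proof -
  have "(\<Sum>n\<in>UNIV. (incidence src dst *v y) $ n) = (incidence src dst *v y) \<bullet> (\<chi> n. 1)"
    by (simp add: inner_vec_def)
  also have "\<dots> = y \<bullet> ((\<chi> n. 1) v* incidence src dst)"
    by (rule inner_matrix_vector_mult)
  also have "(\<chi> n. 1) v* incidence src dst = (0::real^_)"
    using assms by (simp add: vec_eq_iff vector_incidence_mult_nth)
  finally show ?thesis by simp
qed

lemma flowmat_mult_const:
  "\<forall>l. src l \<noteq> dst l \<Longrightarrow> flowmat src dst B *v (\<chi> n. a) = 0"
  by (simp add: flowmat_def matrix_vector_mul_assoc[symmetric] diag_mat_vector_mult vec_eq_iff
      vector_incidence_mult_nth)

lemma laplacian_mult: "laplacian src dst B *v x = incidence src dst *v (flowmat src dst B *v x)"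
  by (simp add: laplacian_def flowmat_def matrix_vector_mul_assoc matrix_mul_assoc)

lemma transpose_laplacian [simp]: "transpose (laplacian src dst B) = laplacian src dst B"
  by (simp add: laplacian_def matrix_transpose_mul matrix_mul_assoc)

lemma transpose_incidence_diag_mat:
  "transpose (incidence src dst ** diag_mat B) = flowmat src dst B"
  by (simp add: matrix_transpose_mul flowmat_def)

lemma inner_laplacian_self:
  "x \<bullet> (laplacian src dst B *v x) = (\<Sum>l\<in>UNIV. B$l * ((x v* incidence src dst)$l)\<^sup>2)"
proof -
  have "x \<bullet> (laplacian src dst B *v x)
      = (diag_mat B *v (x v* incidence src dst)) \<bullet> (x v* incidence src dst)"
    by (simp add: laplacian_mult flowmat_def matrix_vector_mul_assoc[symmetric] inner_commute[of x]
        inner_matrix_vector_mult)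
  then show ?thesis by (simp add: diag_mat_vector_mult inner_vec_def power2_eq_square mult.assoc)
qed

lemma graph_connected_const:
  assumes "graph_connected src dst" "\<forall>l. x$(src l) = x$(dst l)"
  shows "x$a = x$b"
proof -
  have "(a, b) \<in> {(x, y). \<exists>l. (x = src l \<and> y = dst l) \<or> (x = dst l \<and> y = src l)}\<^sup>*"
    using assms(1) unfolding graph_connected_def by blast
  then show ?thesis
    by (induction rule: rtrancl_induct) (use assms(2) in auto)
qed

section \<open>The pseudo-inverse of the Laplacian of a connected network\<close>

lemma penrose_equations_unique:
  fixes A :: "real^'m^'n"
  assumes X: "A ** X ** A = A" "X ** A ** X = X" "transpose (A ** X) = A ** X"
      "transpose (X ** A) = X ** A"
    and Y: "A ** Y ** A = A" "Y ** A ** Y = Y" "transpose (A ** Y) = A ** Y"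
      "transpose (Y ** A) = Y ** A"
  shows "X = Y"
proof -
  have tA: "transpose A = transpose A ** transpose Y ** transpose A"
    by (metis Y(1) matrix_transpose_mul matrix_mul_assoc)
  have tA': "transpose A = transpose A ** transpose X ** transpose A"
    by (metis X(1) matrix_transpose_mul matrix_mul_assoc)
  have "X = X ** (transpose X ** transpose A)"
    using X(2,3) by (metis matrix_mul_assoc matrix_transpose_mul)
  also have "\<dots> = X ** transpose (A ** X) ** transpose (A ** Y)"
    by (subst tA) (simp add: matrix_transpose_mul matrix_mul_assoc)
  also have "\<dots> = X ** A ** Y"
    using X(2,3) Y(3) by (simp add: matrix_mul_assoc)
  finally have XY: "X = X ** A ** Y" .
  have "Y = transpose A ** transpose Y ** Y"
    using Y(2,4) by (metis matrix_transpose_mul)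
  also have "\<dots> = transpose (X ** A) ** transpose (Y ** A) ** Y"
    by (subst tA') (simp add: matrix_transpose_mul matrix_mul_assoc)
  also have "\<dots> = X ** A ** (Y ** A ** Y)"
    using X(4) Y(4) by (simp add: matrix_mul_assoc)
  also have "\<dots> = X ** A ** Y"
    using Y(2) by simp
  finally show ?thesis using XY by simp
qed

lemma matrix_diff_ldistrib: "(A::real^'m^'n) ** (B - C) = A ** B - A ** C"
  by (simp add: vec_eq_iff matrix_matrix_mult_def sum_subtractf algebra_simps)

lemma matrix_diff_rdistrib: "((B::real^'m^'n) - C) ** A = B ** A - C ** A"
  by (simp add: vec_eq_iff matrix_matrix_mult_def sum_subtractf algebra_simps)

lemma matrix_add_rdistrib: "((B::real^'m^'n) + C) ** A = B ** A + C ** A"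
  by (simp add: vec_eq_iff matrix_matrix_mult_def sum.distrib algebra_simps)

lemma transpose_diff: "transpose ((A::real^'m^'n) - B) = transpose A - transpose B"
  by (simp add: vec_eq_iff transpose_def)

definition mean_mat :: "real^'n^'n" where
  "mean_mat = (\<chi> i j. 1 / real CARD('n))"

lemma mean_mat_mult: "(mean_mat::real^'n^'n) *v x = (\<chi> i. (\<Sum>j\<in>UNIV. x$j) / real CARD('n))"
  by (simp add: mean_mat_def matrix_vector_mult_def vec_eq_iff sum_divide_distrib)

lemma transpose_mean_mat [simp]: "transpose mean_mat = mean_mat"
  by (simp add: mean_mat_def transpose_def vec_eq_iff)

lemma mean_mat_idem [simp]: "mean_mat ** mean_mat = mean_mat"
  by (simp add: mean_mat_def matrix_matrix_mult_def vec_eq_iff power2_eq_square)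

lemma mat_1_diff_mean_mat_mult:
  "(mat 1 - (mean_mat::real^'n^'n)) *v x = x - (\<chi> i. (\<Sum>j\<in>UNIV. x$j) / real CARD('n))"
  by (simp add: matrix_vector_mult_diff_rdistrib mean_mat_mult)

locale connected_network =
  fixes src dst :: "'l::finite \<Rightarrow> 'n::finite" and B :: "real^'l"
  assumes no_loops: "\<forall>l. src l \<noteq> dst l"
    and connected: "graph_connected src dst"
    and B_pos: "\<forall>l. 0 < B$l"
begin

abbreviation "Inc \<equiv> incidence src dst"
abbreviation "Lap \<equiv> laplacian src dst B"
abbreviation "Flow \<equiv> flowmat src dst B"

lemma Lap_mean_mat [simp]: "Lap ** mean_mat = 0"
proof -
  have "Lap *v (\<chi> k. 1 / real CARD('n)) = 0"
    using no_loops by (simp add: laplacian_mult flowmat_mult_const)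
  then show ?thesis
    by (simp add: mean_mat_def matrix_matrix_mult_def matrix_vector_mult_def vec_eq_iff)
qed

lemma mean_mat_Lap [simp]: "mean_mat ** Lap = 0"
  by (metis Lap_mean_mat matrix_transpose_mul transpose_laplacian transpose_mean_mat
      transpose_iff transpose_mat mat_0)

text \<open>The quadratic form of \<open>Lap + mean_mat\<close> is the weighted sum of squared potential differences
  along links plus the squared mean; the first vanishes only on constants (connectivity), the
  second then forces the constant to be zero.\<close>
lemma Lap_plus_mean_mat_injective:
  assumes "(Lap + mean_mat) *v x = 0"
  shows "x = 0"
proof -
  let ?t = "x v* Inc" and ?s = "\<Sum>j\<in>UNIV. x$j"
  have "0 = x \<bullet> ((Lap + mean_mat) *v x)"
    using assms by simp
  also have "\<dots> = x \<bullet> (Lap *v x) + x \<bullet> (mean_mat *v x)"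
    by (simp add: matrix_vector_mult_add_rdistrib inner_add_right)
  also have "x \<bullet> (mean_mat *v x) = ?s\<^sup>2 / real CARD('n)"
    by (simp add: mean_mat_mult inner_vec_def power2_eq_square sum_distrib_left
        sum_divide_distrib[symmetric] mult.commute)
  finally have sum0: "(\<Sum>l\<in>UNIV. B$l * (?t$l)\<^sup>2) + ?s\<^sup>2 / real CARD('n) = 0"
    by (simp add: inner_laplacian_self)
  have "(\<Sum>l\<in>UNIV. B$l * (?t$l)\<^sup>2) \<ge> 0"
    using B_pos by (intro sum_nonneg) (simp add: less_imp_le)
  moreover have "?s\<^sup>2 / real CARD('n) \<ge> 0"
    by simp
  ultimately have links0: "(\<Sum>l\<in>UNIV. B$l * (?t$l)\<^sup>2) = 0" and "?s\<^sup>2 / real CARD('n) = 0"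
    using sum0 by linarith+
  then have mean0: "?s = 0"
    by simp
  have "B$l * (?t$l)\<^sup>2 = 0" for l
    using links0 B_pos by (simp add: sum_nonneg_eq_0_iff less_imp_le)
  then have "?t$l = 0" for l
    using B_pos by (metis less_irrefl mult_eq_0_iff power_eq_0_iff)
  then have "\<forall>l. x$(src l) = x$(dst l)"
    using no_loops by (simp add: vector_incidence_mult_nth)
  then have const: "x$a = x$b" for a b
    using graph_connected_const[OF connected] by blast
  have "?s = (\<Sum>j::'n\<in>UNIV. x$a)" for a
    by (rule sum.cong) (use const in auto)
  then show ?thesis
    using mean0 const by (simp add: vec_eq_iff)
qed

text \<open>The pseudo-inverse of the Laplacian is \<open>(Lap + mean_mat)\<^sup>-\<^sup>1 - mean_mat\<close>.\<close>
lemma Lap_pinv: "Lap ** pinv Lap = mat 1 - mean_mat \<and> pinv Lap ** Lap = mat 1 - mean_mat"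
proof -
  define A where "A = Lap + mean_mat"
  obtain Ai where AiA: "Ai ** A = mat 1"
    using Lap_plus_mean_mat_injective matrix_left_invertible_ker unfolding A_def by blast
  then have AAi: "A ** Ai = mat 1"
    using matrix_left_right_inverse by blast
  have AJ: "A ** mean_mat = mean_mat" and JA: "mean_mat ** A = mean_mat"
    unfolding A_def by (simp_all add: matrix_add_rdistrib matrix_add_ldistrib)
  have AiJ: "Ai ** mean_mat = mean_mat"
    by (metis AJ AiA matrix_mul_assoc matrix_mul_lid)
  have JAi: "mean_mat ** Ai = mean_mat"
    by (metis JA AAi matrix_mul_assoc matrix_mul_rid)
  have LA: "Lap = A - mean_mat"
    unfolding A_def by simp
  define X where "X = Ai - mean_mat"
  have LX: "Lap ** X = mat 1 - mean_mat"
    unfolding X_def by (simp add: matrix_diff_ldistrib) (simp add: LA matrix_diff_rdistrib AAi JAi)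
  have XL: "X ** Lap = mat 1 - mean_mat"
    unfolding X_def by (simp add: matrix_diff_rdistrib) (simp add: LA matrix_diff_ldistrib AiA AiJ)
  have XLX: "X ** Lap ** X = X"
    by (simp add: XL matrix_diff_rdistrib) (simp add: X_def matrix_diff_ldistrib JAi)
  have LXL: "Lap ** X ** Lap = Lap"
    by (simp add: LX matrix_diff_rdistrib)
  have sym: "transpose (mat 1 - mean_mat) = (mat 1 - mean_mat :: real^'n^'n)"
    by (simp add: transpose_diff)
  have "pinv Lap = X"
    unfolding pinv_def
  proof (rule the_equality)
    fix Y
    assume "Lap ** Y ** Lap = Lap \<and> Y ** Lap ** Y = Y \<and> transpose (Lap ** Y) = Lap ** Y
      \<and> transpose (Y ** Lap) = Y ** Lap"
    then show "Y = X"
      using penrose_equations_unique[of Lap Y X] LXL XLX LX XL sym by simp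
  qed (use LXL XLX LX XL sym in simp)
  then show ?thesis
    using LX XL by simp
qed

lemma Lap_pinv_mult:
  assumes "(\<Sum>j\<in>UNIV. p$j) = 0"
  shows "Lap *v (pinv Lap *v p) = p"
proof -
  have "Lap *v (pinv Lap *v p) = (mat 1 - mean_mat) *v p"
    using Lap_pinv by (simp add: matrix_vector_mul_assoc)
  then show ?thesis
    using assms by (simp add: mat_1_diff_mean_mat_mult vec_eq_iff)
qed

lemma Flow_pinv_Lap_mult: "Flow *v (pinv Lap *v (Lap *v \<phi>)) = Flow *v \<phi>"
proof -
  have "pinv Lap *v (Lap *v \<phi>) = (mat 1 - mean_mat) *v \<phi>"
    using Lap_pinv by (simp add: matrix_vector_mul_assoc)
  then show ?thesis
    using flowmat_mult_const[OF no_loops]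
    by (simp add: mat_1_diff_mean_mat_mult matrix_vector_mult_diff_distrib)
qed

lemma ptdf_mult: "ptdf src dst B *v p = Flow *v (pinv Lap *v p)"
  by (simp add: ptdf_def flowmat_def matrix_vector_mul_assoc)

end

section \<open>The problems FR and FR'\<close>

context connected_network
begin

lemma FRp_feasible_imp_FR_feasible:
  assumes "FRp_feasible src dst B D f qlo qhi qb qp d r \<omega> v \<phi>"
  shows "FR_feasible src dst B f qlo qhi qb qp d r"
    and "ptdf src dst B *v (qb + qp + r - d) = Flow *v \<phi>"
proof -
  have p: "qb + qp + r - d = Lap *v \<phi>"
    using assms unfolding FRp_feasible_def by blast
  then show flow: "ptdf src dst B *v (qb + qp + r - d) = Flow *v \<phi>"
    by (simp add: ptdf_mult Flow_pinv_Lap_mult)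
  have "(\<Sum>n\<in>UNIV. (qb + qp + r - d)$n) = 0"
    using sum_incidence_mult_eq_0[OF no_loops] by (simp only: p laplacian_mult)
  then show "FR_feasible src dst B f qlo qhi qb qp d r"
    using assms unfolding FR_feasible_def FRp_feasible_def box_ok_def flow by blast
qed

lemma FR_feasible_imp_FRp_feasible:
  assumes "FR_feasible src dst B f qlo qhi qb qp d r"
  defines "\<phi> \<equiv> pinv Lap *v (qb + qp + r - d)"
  shows "FRp_feasible src dst B D f qlo qhi qb qp d r 0 (Flow *v \<phi>) \<phi>"
proof -
  have "qb + qp + r - d = Lap *v \<phi>"
    using assms Lap_pinv_mult unfolding FR_feasible_def by simp
  then show ?thesis
    using assms unfolding FR_feasible_def FRp_feasible_def box_ok_def ptdf_mult
    by (simp add: laplacian_mult)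
qed

end

lemma FRp_obj_eq: "FRp_obj c D qp r \<omega> = gen_cost c qp r + (\<Sum>n\<in>UNIV. D$n * (\<omega>$n)\<^sup>2 / 2)"
  by (simp add: FRp_obj_def gen_cost_def sum.distrib)

lemma FRp_optimal_frequency_zero:
  assumes D_pos: "\<forall>n. 0 < D$n"
    and opt: "FRp_optimal c src dst B D f qlo qhi qb qp d r \<omega> v \<phi>"
  shows "\<omega> = 0"
proof -
  have "FRp_feasible src dst B D f qlo qhi qb qp d r 0 (flowmat src dst B *v \<phi>) \<phi>"
    using opt unfolding FRp_optimal_def FRp_feasible_def by (simp add: laplacian_mult)
  then have "FRp_obj c D qp r \<omega> \<le> FRp_obj c D qp r 0"
    using opt unfolding FRp_optimal_def by blast
  then have "(\<Sum>n\<in>UNIV. D$n * (\<omega>$n)\<^sup>2 / 2) \<le> 0"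
    by (simp add: FRp_obj_eq)
  moreover have nonneg: "0 \<le> D$n * (\<omega>$n)\<^sup>2 / 2" for n
    using D_pos by (simp add: less_imp_le)
  ultimately have "(\<Sum>n\<in>UNIV. D$n * (\<omega>$n)\<^sup>2 / 2) = 0"
    by (simp add: antisym sum_nonneg)
  then have "\<forall>n. D$n * (\<omega>$n)\<^sup>2 / 2 = 0"
    using nonneg by (simp add: sum_nonneg_eq_0_iff)
  then show ?thesis
    using D_pos by (simp add: vec_eq_iff) (metis less_irrefl)
qed

lemma FR_feasible_midpoint:
  assumes "FR_feasible src dst B f qlo qhi qb qp d r" "FR_feasible src dst B f qlo qhi qb qp d r'"
  shows "FR_feasible src dst B f qlo qhi qb qp d ((1/2) *\<^sub>R (r + r'))"
proof -
  let ?H = "ptdf src dst B"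
  define p p' where "p = qb + qp + r - d" and "p' = qb + qp + r' - d"
  have mid: "qb + qp + (1/2) *\<^sub>R (r + r') - d = (1/2) *\<^sub>R (p + p')"
    unfolding p_def p'_def by (simp add: vec_eq_iff field_simps)
  have H: "?H *v ((1/2) *\<^sub>R (p + p')) = (1/2) *\<^sub>R (?H *v p + ?H *v p')"
    by (simp only: matrix_vector_mult_scaleR matrix_vector_right_distrib)
  have "- f$l \<le> (?H *v ((1/2) *\<^sub>R (p + p')))$l \<and> (?H *v ((1/2) *\<^sub>R (p + p')))$l \<le> f$l" for l
  proof -
    have "- f$l \<le> (?H *v p)$l" "(?H *v p)$l \<le> f$l" "- f$l \<le> (?H *v p')$l" "(?H *v p')$l \<le> f$l"
      using assms unfolding FR_feasible_def p_def p'_def by auto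
    then show ?thesis
      unfolding H by simp
  qed
  moreover have "qlo$n \<le> qp$n + ((1/2) *\<^sub>R (r + r'))$n \<and> qp$n + ((1/2) *\<^sub>R (r + r'))$n \<le> qhi$n"
    for n
  proof -
    have "qlo$n \<le> qp$n + r$n" "qp$n + r$n \<le> qhi$n" "qlo$n \<le> qp$n + r'$n" "qp$n + r'$n \<le> qhi$n"
      using assms unfolding FR_feasible_def by auto
    then show ?thesis
      by (simp add: field_simps)
  qed
  ultimately show ?thesis
    using assms
    unfolding FR_feasible_def mid p_def[symmetric] p'_def[symmetric]
    by (auto simp: sum.distrib field_simps sum_divide_distrib[symmetric])
qed

lemma gen_cost_midpoint_less:
  assumes "\<forall>n. strictly_convex (c n)" "r \<noteq> r'"
  shows "gen_cost c qp ((1/2) *\<^sub>R (r + r')) < (gen_cost c qp r + gen_cost c qp r') / 2"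
proof -
  have mid: "qp$n + ((1/2) *\<^sub>R (r + r'))$n = ((qp$n + r$n) + (qp$n + r'$n)) / 2" for n
    by (simp add: field_simps)
  have lt: "c n (qp$n + ((1/2) *\<^sub>R (r + r'))$n) < (c n (qp$n + r$n) + c n (qp$n + r'$n)) / 2"
    if "r$n \<noteq> r'$n" for n
  proof -
    have "qp$n + r$n \<noteq> qp$n + r'$n"
      using that by simp
    from strictly_convex_midpoint[OF assms(1)[rule_format] this] show ?thesis
      unfolding mid .
  qed
  have le: "c n (qp$n + ((1/2) *\<^sub>R (r + r'))$n) \<le> (c n (qp$n + r$n) + c n (qp$n + r'$n)) / 2"
    for n
  proof (cases "r$n = r'$n")
    case True
    then have "((1/2) *\<^sub>R (r + r'))$n = r$n"
      by simp
    with True show ?thesis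
      by simp
  qed (use lt in \<open>simp add: less_imp_le\<close>)
  obtain n0 where "r$n0 \<noteq> r'$n0"
    using assms(2) by (auto simp: vec_eq_iff)
  then have "gen_cost c qp ((1/2) *\<^sub>R (r + r'))
      < (\<Sum>n\<in>UNIV. (c n (qp$n + r$n) + c n (qp$n + r'$n)) / 2)"
    unfolding gen_cost_def using le lt by (intro sum_strict_mono_ex1) auto
  then show ?thesis
    unfolding gen_cost_def by (simp add: sum.distrib sum_divide_distrib[symmetric])
qed

lemma FR_optimal_unique:
  assumes "\<forall>n. strictly_convex (c n)" and opt: "FR_optimal c src dst B f qlo qhi qb qp d r"
    and feas': "FR_feasible src dst B f qlo qhi qb qp d r'" and le: "gen_cost c qp r' \<le> gen_cost c qp r"
  shows "r' = r"
proof (rule ccontr)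
  assume "r' \<noteq> r"
  moreover have "FR_feasible src dst B f qlo qhi qb qp d ((1/2) *\<^sub>R (r + r'))"
    using opt feas' unfolding FR_optimal_def by (blast intro: FR_feasible_midpoint)
  then have "gen_cost c qp r \<le> gen_cost c qp ((1/2) *\<^sub>R (r + r'))"
    using opt unfolding FR_optimal_def by blast
  ultimately show False
    using gen_cost_midpoint_less[OF assms(1), of r r' qp] le by simp
qed

section \<open>Farkas' lemma and KKT conditions under linear constraints\<close>

definition nonneg_combinations :: "'i set \<Rightarrow> ('i \<Rightarrow> 'a::real_vector) \<Rightarrow> 'a set" where
  "nonneg_combinations I a = {y. \<exists>lm. (\<forall>i\<in>I. 0 \<le> lm i) \<and> y = (\<Sum>i\<in>I. lm i *\<^sub>R a i)}"

lemma convex_cone_nonneg_combinations: "convex_cone (nonneg_combinations I a)"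
  unfolding convex_cone_def
proof (intro conjI)
  show "nonneg_combinations I a \<noteq> {}"
    unfolding nonneg_combinations_def by (auto intro!: exI[of _ "\<lambda>i. 0"])
  show "convex (nonneg_combinations I a)"
    unfolding convex_def
  proof (intro ballI allI impI)
    fix x y and u v :: real
    assume "x \<in> nonneg_combinations I a" "y \<in> nonneg_combinations I a" "0 \<le> u" "0 \<le> v"
    then obtain lm mu where "\<forall>i\<in>I. 0 \<le> lm i" "x = (\<Sum>i\<in>I. lm i *\<^sub>R a i)"
      "\<forall>i\<in>I. 0 \<le> mu i" "y = (\<Sum>i\<in>I. mu i *\<^sub>R a i)"
      unfolding nonneg_combinations_def by blast
    with \<open>0 \<le> u\<close> \<open>0 \<le> v\<close> have "\<forall>i\<in>I. 0 \<le> u * lm i + v * mu i"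
      and "u *\<^sub>R x + v *\<^sub>R y = (\<Sum>i\<in>I. (u * lm i + v * mu i) *\<^sub>R a i)"
      by (simp_all add: scaleR_sum_right sum.distrib scaleR_add_left)
    then show "u *\<^sub>R x + v *\<^sub>R y \<in> nonneg_combinations I a"
      unfolding nonneg_combinations_def by (intro CollectI exI conjI)
  qed
  show "conic (nonneg_combinations I a)"
    unfolding conic_def
  proof (intro allI impI)
    fix x and t :: real
    assume "x \<in> nonneg_combinations I a" "0 \<le> t"
    then obtain lm where "\<forall>i\<in>I. 0 \<le> lm i" "x = (\<Sum>i\<in>I. lm i *\<^sub>R a i)"
      unfolding nonneg_combinations_def by blast
    with \<open>0 \<le> t\<close> have "\<forall>i\<in>I. 0 \<le> t * lm i" and "t *\<^sub>R x = (\<Sum>i\<in>I. (t * lm i) *\<^sub>R a i)"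
      by (simp_all add: scaleR_sum_right)
    then show "t *\<^sub>R x \<in> nonneg_combinations I a"
      unfolding nonneg_combinations_def by (intro CollectI exI conjI)
  qed
qed

lemma generator_mem_nonneg_combinations:
  assumes "finite I" "j \<in> I"
  shows "a j \<in> nonneg_combinations I a"
proof -
  have "(\<Sum>i\<in>I. (if i = j then 1 else 0) *\<^sub>R a i) = a j"
    using assms by (simp add: if_distrib[of "\<lambda>c. c *\<^sub>R _"] cong: if_cong)
  then show ?thesis
    unfolding nonneg_combinations_def by (intro CollectI exI[of _ "\<lambda>i. if i = j then 1 else 0"]) auto
qed

text \<open>Separate \<open>g\<close> from the finitely generated, hence closed, cone.\<close>
lemma farkas_lemma:
  fixes a :: "'i \<Rightarrow> 'a::euclidean_space"
  assumes fin: "finite I" and H: "\<forall>x. (\<forall>i\<in>I. 0 \<le> a i \<bullet> x) \<longrightarrow> 0 \<le> g \<bullet> x"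
  shows "g \<in> nonneg_combinations I a"
proof -
  let ?C = "convex_cone hull (a ` I)"
  have "?C \<subseteq> nonneg_combinations I a"
    using convex_cone_nonneg_combinations generator_mem_nonneg_combinations[OF fin]
    by (intro hull_minimal) auto
  moreover have "g \<in> ?C"
  proof (rule ccontr)
    assume "g \<notin> ?C"
    moreover have "closed ?C"
      using fin by (simp add: closed_convex_cone_hull)
    ultimately obtain w b where wb: "w \<bullet> g < b" "\<forall>x\<in>?C. w \<bullet> x > b"
      using separating_hyperplane_closed_point[OF convex_convex_cone_hull] by blast
    have b0: "b < 0"
      using wb(2) convex_cone_hull_contains_0 by force
    have "0 \<le> a i \<bullet> w" if i: "i \<in> I" for i
    proof (rule ccontr)
      assume neg: "\<not> 0 \<le> a i \<bullet> w"
      define t where "t = b / (w \<bullet> a i)"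
      have "0 \<le> t"
        using neg b0 unfolding t_def by (simp add: inner_commute divide_nonpos_neg less_imp_le)
      moreover have "a i \<in> ?C"
        using i by (intro hull_inc) simp
      ultimately have "t *\<^sub>R a i \<in> ?C"
        using conicD[OF conic_convex_cone_hull] by blast
      then have "w \<bullet> (t *\<^sub>R a i) > b"
        using wb by blast
      moreover have "w \<bullet> (t *\<^sub>R a i) = b"
        using neg unfolding t_def by (simp add: inner_commute)
      ultimately show False
        by simp
    qed
    then have "0 \<le> g \<bullet> w"
      using H by blast
    then show False
      using wb b0 by (simp add: inner_commute)
  qed
  ultimately show ?thesis
    by blast
qed

lemma feasible_direction_small_step:
  fixes a :: "'i \<Rightarrow> 'a::euclidean_space"
  assumes fin: "finite I" and feas: "\<forall>i\<in>I. b i \<le> a i \<bullet> x0"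
    and act: "\<forall>i\<in>I. a i \<bullet> x0 = b i \<longrightarrow> 0 \<le> a i \<bullet> d"
  shows "\<exists>e>0. \<forall>h. 0 < h \<and> h < e \<longrightarrow> (\<forall>i\<in>I. b i \<le> a i \<bullet> (x0 + h *\<^sub>R d))"
proof -
  define A where "A = {i\<in>I. a i \<bullet> x0 = b i}"
  define q where "q i = (a i \<bullet> x0 - b i) / (\<bar>a i \<bullet> d\<bar> + 1)" for i
  define e where "e = Min (insert 1 (q ` (I - A)))"
  have fin_q: "finite (insert 1 (q ` (I - A)))"
    using fin by simp
  have "0 < q i" if "i \<in> I - A" for i
  proof -
    have "b i < a i \<bullet> x0"
      using that feas unfolding A_def by force
    then show ?thesis
      unfolding q_def by (simp add: add_pos_nonneg)
  qed
  then have e0: "0 < e"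
    unfolding e_def using fin_q by (subst Min_gr_iff) auto
  have e_le: "e \<le> q i" if "i \<in> I - A" for i
    unfolding e_def using fin_q that by (intro Min_le) auto
  have "b i \<le> a i \<bullet> (x0 + h *\<^sub>R d)" if h: "0 < h" "h < e" and i: "i \<in> I" for h i
  proof (cases "i \<in> A")
    case True
    then show ?thesis
      using act h unfolding A_def by (simp add: inner_add_right)
  next
    case False
    then have "h < (a i \<bullet> x0 - b i) / (\<bar>a i \<bullet> d\<bar> + 1)"
      using e_le[of i] i h unfolding q_def by simp
    then have "h * (\<bar>a i \<bullet> d\<bar> + 1) < a i \<bullet> x0 - b i"
      by (simp add: pos_less_divide_eq add_pos_nonneg)
    moreover have "h * (- (a i \<bullet> d)) \<le> h * \<bar>a i \<bullet> d\<bar>"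
      using h by (intro mult_left_mono) auto
    ultimately show ?thesis
      using h by (simp add: inner_add_right algebra_simps)
  qed
  then show ?thesis
    using e0 by blast
qed

lemma linear_constraints_first_order:
  fixes a :: "'i \<Rightarrow> 'a::euclidean_space" and J :: "'a \<Rightarrow> real"
  assumes fin: "finite I" and feas: "\<forall>i\<in>I. b i \<le> a i \<bullet> x0"
    and opt: "\<forall>x. (\<forall>i\<in>I. b i \<le> a i \<bullet> x) \<longrightarrow> J x0 \<le> J x"
    and der: "((\<lambda>t. J (x0 + t *\<^sub>R d)) has_real_derivative (g \<bullet> d)) (at 0)"
    and act: "\<forall>i\<in>I. a i \<bullet> x0 = b i \<longrightarrow> 0 \<le> a i \<bullet> d"
  shows "0 \<le> g \<bullet> d"
proof (rule ccontr)
  assume "\<not> 0 \<le> g \<bullet> d"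
  then obtain \<delta> where \<delta>: "\<delta> > 0" "\<forall>h>0. h < \<delta> \<longrightarrow> J (x0 + (0 + h) *\<^sub>R d) < J (x0 + 0 *\<^sub>R d)"
    using DERIV_neg_dec_right[OF der] by force
  obtain e where e: "e > 0" "\<forall>h. 0 < h \<and> h < e \<longrightarrow> (\<forall>i\<in>I. b i \<le> a i \<bullet> (x0 + h *\<^sub>R d))"
    using feasible_direction_small_step[OF fin feas act] by blast
  define h where "h = min \<delta> e / 2"
  have h: "0 < h" "h < \<delta>" "h < e"
    using \<delta>(1) e(1) unfolding h_def by auto
  then have "J (x0 + h *\<^sub>R d) < J x0"
    using \<delta>(2) by simp
  moreover have "J x0 \<le> J (x0 + h *\<^sub>R d)"
    using opt e(2) h by blast
  ultimately show False
    by simp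
qed

text \<open>No constraint qualification is needed: the constraints are linear.\<close>
lemma linear_constraints_kkt:
  fixes a :: "'i \<Rightarrow> 'a::euclidean_space" and J :: "'a \<Rightarrow> real"
  assumes fin: "finite I" and feas: "\<forall>i\<in>I. b i \<le> a i \<bullet> x0"
    and opt: "\<forall>x. (\<forall>i\<in>I. b i \<le> a i \<bullet> x) \<longrightarrow> J x0 \<le> J x"
    and der: "\<forall>d. ((\<lambda>t. J (x0 + t *\<^sub>R d)) has_real_derivative (g \<bullet> d)) (at 0)"
  shows "\<exists>lm. (\<forall>i\<in>I. 0 \<le> lm i) \<and> (\<forall>i\<in>I. lm i * (a i \<bullet> x0 - b i) = 0)
    \<and> g = (\<Sum>i\<in>I. lm i *\<^sub>R a i)"
proof -
  define A where "A = {i\<in>I. a i \<bullet> x0 = b i}"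
  have "finite A"
    using fin unfolding A_def by simp
  moreover have "\<forall>d. (\<forall>i\<in>A. 0 \<le> a i \<bullet> d) \<longrightarrow> 0 \<le> g \<bullet> d"
    using linear_constraints_first_order[OF fin feas opt der[rule_format]] unfolding A_def by blast
  ultimately obtain lm where lm: "\<forall>i\<in>A. 0 \<le> lm i" "g = (\<Sum>i\<in>A. lm i *\<^sub>R a i)"
    using farkas_lemma unfolding nonneg_combinations_def by blast
  define lm' where "lm' i = (if i \<in> A then lm i else 0)" for i
  have "(\<Sum>i\<in>I. lm' i *\<^sub>R a i) = (\<Sum>i\<in>I. if i \<in> A then lm i *\<^sub>R a i else 0)"
    unfolding lm'_def by (rule sum.cong) auto
  also have "\<dots> = (\<Sum>i\<in>I \<inter> A. lm i *\<^sub>R a i)"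
    using fin by (rule sum.inter_restrict[symmetric])
  also have "I \<inter> A = A"
    unfolding A_def by auto
  finally have "g = (\<Sum>i\<in>I. lm' i *\<^sub>R a i)"
    using lm(2) by simp
  moreover have "0 \<le> lm' i" "lm' i * (a i \<bullet> x0 - b i) = 0" for i
    using lm(1) unfolding lm'_def A_def by auto
  ultimately show ?thesis
    by blast
qed

section \<open>Duality for FR'\<close>

lemma inner_nonneg_nonpos_le_0:
  "\<forall>l. 0 \<le> a$l \<Longrightarrow> \<forall>l. b$l \<le> 0 \<Longrightarrow> a \<bullet> (b::real^'l) \<le> 0"
  unfolding inner_vec_def by (intro sum_nonpos) (simp add: mult_nonneg_nonpos)

lemma proj_plus_eq_0_iff:
  assumes "\<forall>l. 0 \<le> a$l" "\<forall>l. b$l \<le> 0"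
  shows "proj_plus a b = 0 \<longleftrightarrow> a \<bullet> (b::real^'l) = 0"
proof -
  have "proj_plus a b = 0 \<longleftrightarrow> (\<forall>l. a$l * b$l = 0)"
    using assms unfolding proj_plus_def vec_eq_iff by (auto simp: less_le)
  also have "\<dots> \<longleftrightarrow> (\<forall>l\<in>UNIV. - (a$l * b$l) = 0)"
    by simp
  also have "\<dots> \<longleftrightarrow> a \<bullet> b = 0"
    using assms sum_nonneg_eq_0_iff[of UNIV "\<lambda>l. - (a$l * b$l)"]
    by (simp add: inner_vec_def sum_negf mult_nonneg_nonpos)
  finally show ?thesis .
qed

lemma sum_vec_update:
  fixes g :: "'n::finite \<Rightarrow> real \<Rightarrow> real"
  shows "(\<Sum>k\<in>UNIV. g k ((\<chi> j. if j = n then t else x$j)$k))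
    = (\<Sum>k\<in>UNIV. g k (x$k)) - g n (x$n) + g n t"
  by (simp add: sum.remove[of UNIV n])

lemma gen_cost_add_inner:
  "gen_cost c qp x + \<pi> \<bullet> x = (\<Sum>n\<in>UNIV. c n (qp$n + x$n) + \<pi>$n * x$n)"
  by (simp add: gen_cost_def inner_vec_def sum.distrib)

context connected_network
begin

lemma inner_Lap_mult: "\<pi> \<bullet> (Lap *v \<phi>) = (Lap *v \<pi>) \<bullet> \<phi>"
  by (metis inner_commute inner_matrix_vector_mult transpose_laplacian transpose_matrix_vector)

lemma inner_incidence_diag_mult: "((Inc ** diag_mat B) *v \<mu>) \<bullet> \<phi> = \<mu> \<bullet> (Flow *v \<phi>)"
  by (metis inner_matrix_vector_mult transpose_incidence_diag_mat transpose_matrix_vector)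

lemma FRp_lagrangian_zero_lam:
  "FRp_lagrangian c src dst B D f qb qp d r \<omega> v \<phi> 0 \<pi> mulow mubar =
     gen_cost c qp r + (\<Sum>n\<in>UNIV. D$n * (\<omega>$n)\<^sup>2 / 2) + \<pi> \<bullet> (qb + qp + r - d)
     - mubar \<bullet> f - mulow \<bullet> f + ((Inc ** diag_mat B) *v (mubar - mulow) - Lap *v \<pi>) \<bullet> \<phi>"
proof -
  have "mubar \<bullet> (Flow *v \<phi> - f) + mulow \<bullet> (- f - Flow *v \<phi>)
      = ((Inc ** diag_mat B) *v (mubar - mulow)) \<bullet> \<phi> - mubar \<bullet> f - mulow \<bullet> f"
    by (simp add: inner_incidence_diag_mult inner_diff_right inner_diff_left algebra_simps)
  then show ?thesis
    unfolding FRp_lagrangian_def FRp_obj_eq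
    by (simp add: inner_diff_right inner_Lap_mult inner_diff_left algebra_simps)
qed

end

locale FRp_optimum = connected_network src dst B
  for src dst :: "'l::finite \<Rightarrow> 'n::finite" and B :: "real^'l" +
  fixes c :: "'n \<Rightarrow> real \<Rightarrow> real" and D qlo qhi qb qp d r \<omega> \<phi> :: "real^'n"
    and f v :: "real^'l"
  assumes D_pos: "\<forall>n. 0 < D$n"
    and cost_strict_convex: "\<forall>n. strictly_convex (c n)"
    and cost_C1: "\<forall>n. c n C1_differentiable_on UNIV"
    and cost_deriv_surj: "\<forall>n. surj (deriv (c n))"
    and optimal: "FRp_optimal c src dst B D f qlo qhi qb qp d r \<omega> v \<phi>"
begin

abbreviation "opt_cost \<equiv> gen_cost c qp r"

lemma frequency_zero: "\<omega> = 0"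
  using FRp_optimal_frequency_zero[OF D_pos optimal] .

lemma feasible: "FRp_feasible src dst B D f qlo qhi qb qp d r \<omega> v \<phi>"
  using optimal unfolding FRp_optimal_def by blast

lemma balance: "qb + qp + r - d = Lap *v \<phi>"
  and nodal_balance: "qb + qp + r - d - diag_mat D *v \<omega> = Inc *v v"
  and flow_limits: "\<forall>l. - f$l \<le> (Flow *v \<phi>)$l \<and> (Flow *v \<phi>)$l \<le> f$l"
  and box: "box_ok qlo qhi qp r"
  using feasible unfolding FRp_feasible_def by blast+

lemma dispatch_mem_box: "r$n \<in> {qlo$n - qp$n..qhi$n - qp$n}"
  using box unfolding box_ok_def by (auto simp: algebra_simps)

lemma FRp_lagrangian_at_optimum:
  "FRp_lagrangian c src dst B D f qb qp d r \<omega> v \<phi> lam \<pi> mulow mubar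
     = opt_cost + mubar \<bullet> (Flow *v \<phi> - f) + mulow \<bullet> (- f - Flow *v \<phi>)"
  unfolding FRp_lagrangian_def using nodal_balance balance frequency_zero by (simp add: FRp_obj_eq)

lemma FRp_dual_le_lagrangian:
  "box_ok qlo qhi qp x \<Longrightarrow> FRp_dual c src dst B D f qlo qhi qb qp d lam \<pi> mulow mubar
     \<le> ereal (FRp_lagrangian c src dst B D f qb qp d x \<omega>' v' \<phi>' lam \<pi> mulow mubar)"
  unfolding FRp_dual_def by (rule INF_lower2[of "(x, \<omega>', v', \<phi>')"]) auto

lemma slack_nonpos:
  assumes "dual_feasible mulow mubar"
  shows "mubar \<bullet> (Flow *v \<phi> - f) \<le> 0" "mulow \<bullet> (- f - Flow *v \<phi>) \<le> 0"
  using assms flow_limits unfolding dual_feasible_def by (auto intro: inner_nonneg_nonpos_le_0)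

lemma FRp_dual_le_opt_cost:
  "dual_feasible mulow mubar \<Longrightarrow>
     FRp_dual c src dst B D f qlo qhi qb qp d lam \<pi> mulow mubar \<le> ereal opt_cost"
  using FRp_dual_le_lagrangian[OF box, of lam \<pi> mulow mubar \<omega> v \<phi>] slack_nonpos
  unfolding FRp_lagrangian_at_optimum by (smt (verit) ereal_less_eq(3) order_trans)

text \<open>The KKT conditions of FR' at the optimum; the multiplier of (b) is \<open>\<omega> = 0\<close> and is left out.\<close>
definition kkt :: "real^'n \<Rightarrow> real^'l \<Rightarrow> real^'l \<Rightarrow> bool" where
  "kkt \<pi> mulow mubar \<longleftrightarrow> dual_feasible mulow mubar \<and>
     Lap *v \<pi> = (Inc ** diag_mat B) *v (mubar - mulow) \<and>
     (\<forall>n. \<forall>t\<in>{qlo$n - qp$n..qhi$n - qp$n}.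
        c n (qp$n + r$n) + \<pi>$n * r$n \<le> c n (qp$n + t) + \<pi>$n * t) \<and>
     mubar \<bullet> (Flow *v \<phi> - f) = 0 \<and> mulow \<bullet> (- f - Flow *v \<phi>) = 0"

lemma kkt_imp_opt_cost_le_FRp_dual:
  assumes "kkt \<pi> mulow mubar"
  shows "ereal opt_cost \<le> FRp_dual c src dst B D f qlo qhi qb qp d 0 \<pi> mulow mubar"
  unfolding FRp_dual_def
proof (rule INF_greatest, clarify)
  fix x \<omega>' \<phi>' v'
  assume "box_ok qlo qhi qp x"
  then have "x$n \<in> {qlo$n - qp$n..qhi$n - qp$n}" for n
    unfolding box_ok_def by (auto simp: algebra_simps)
  then have "opt_cost + \<pi> \<bullet> r \<le> gen_cost c qp x + \<pi> \<bullet> x"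
    using assms unfolding gen_cost_add_inner kkt_def by (intro sum_mono) blast
  moreover have "0 \<le> (\<Sum>n\<in>UNIV. D$n * (\<omega>'$n)\<^sup>2 / 2)"
    using D_pos by (intro sum_nonneg) (simp add: less_imp_le)
  moreover have "\<pi> \<bullet> (qb + qp + r - d) = mubar \<bullet> f + mulow \<bullet> f"
  proof -
    have "\<pi> \<bullet> (qb + qp + r - d) = (mubar - mulow) \<bullet> (Flow *v \<phi>)"
      using assms unfolding balance inner_Lap_mult kkt_def by (simp add: inner_incidence_diag_mult)
    also have "\<dots> = mubar \<bullet> f + mulow \<bullet> f"
      using assms unfolding kkt_def by (simp add: inner_diff_left inner_diff_right algebra_simps)
    finally show ?thesis .
  qed
  moreover have "\<pi> \<bullet> (qb + qp + y - d) = \<pi> \<bullet> (qb + qp - d) + \<pi> \<bullet> y" for y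
    by (simp add: inner_add_right inner_diff_right algebra_simps)
  ultimately show "ereal opt_cost
      \<le> ereal (FRp_lagrangian c src dst B D f qb qp d x \<omega>' v' \<phi>' 0 \<pi> mulow mubar)"
    using assms unfolding FRp_lagrangian_zero_lam kkt_def by simp
qed

text \<open>Evaluating the Lagrangian bound at \<open>\<phi> - w\<close> forces stationarity \<open>w = 0\<close>; evaluating it
  at single-coordinate changes of \<open>r\<close> gives coordinatewise minimality.\<close>
lemma opt_cost_le_FRp_dual_imp_kkt:
  assumes bound: "ereal opt_cost \<le> FRp_dual c src dst B D f qlo qhi qb qp d 0 \<pi> mulow mubar"
    and df: "dual_feasible mulow mubar"
  shows "kkt \<pi> mulow mubar"
proof -
  have lagr: "opt_cost \<le> FRp_lagrangian c src dst B D f qb qp d x \<omega>' v' \<phi>' 0 \<pi> mulow mubar"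
    if "box_ok qlo qhi qp x" for x \<omega>' v' \<phi>'
    using order_trans[OF bound FRp_dual_le_lagrangian[OF that]] by simp
  have CS: "mubar \<bullet> (Flow *v \<phi> - f) = 0" "mulow \<bullet> (- f - Flow *v \<phi>) = 0"
    using lagr[OF box, of \<omega> v \<phi>] slack_nonpos[OF df] unfolding FRp_lagrangian_at_optimum
    by linarith+
  define w where "w = (Inc ** diag_mat B) *v (mubar - mulow) - Lap *v \<pi>"
  have pi_affine: "\<pi> \<bullet> (qb + qp + y - d) = \<pi> \<bullet> (qb + qp - d) + \<pi> \<bullet> y" for y
    by (simp add: inner_add_right inner_diff_right algebra_simps)
  have key: "opt_cost + \<pi> \<bullet> r + w \<bullet> \<phi> \<le> gen_cost c qp x + \<pi> \<bullet> x + w \<bullet> \<phi>'"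
    if "box_ok qlo qhi qp x" for x \<phi>'
  proof -
    have "opt_cost = FRp_lagrangian c src dst B D f qb qp d r \<omega> v \<phi> 0 \<pi> mulow mubar"
      unfolding FRp_lagrangian_at_optimum CS by simp
    then show ?thesis
      using lagr[OF that, of 0 v \<phi>'] pi_affine[of r] pi_affine[of x]
      unfolding FRp_lagrangian_zero_lam frequency_zero w_def[symmetric] by simp
  qed
  have "w \<bullet> w \<le> 0"
    using key[OF box, of "\<phi> - w"] by (simp add: inner_diff_right)
  then have stationary: "Lap *v \<pi> = (Inc ** diag_mat B) *v (mubar - mulow)"
    unfolding w_def by (metis eq_iff_diff_eq_0 inner_eq_zero_iff inner_ge_zero order_antisym)
  have "c n (qp$n + r$n) + \<pi>$n * r$n \<le> c n (qp$n + t) + \<pi>$n * t"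
    if t: "t \<in> {qlo$n - qp$n..qhi$n - qp$n}" for n t
  proof -
    define x where "x = (\<chi> j. if j = n then t else r$j)"
    have "box_ok qlo qhi qp x"
      using box t unfolding box_ok_def x_def by (auto simp: algebra_simps)
    from key[OF this, of \<phi>] have "opt_cost + \<pi> \<bullet> r \<le> gen_cost c qp x + \<pi> \<bullet> x"
      by simp
    then show ?thesis
      unfolding gen_cost_add_inner x_def
      using sum_vec_update[of "\<lambda>k y. c k (qp$k + y) + \<pi>$k * y" n t r] by simp
  qed
  then show ?thesis
    unfolding kkt_def using df stationary CS by blast
qed

end

text \<open>FR' in the variables \<open>(r, \<phi>)\<close> as a linear program: two box constraints per node, the power
  balance (c) as two opposite inequalities per node, and the two flow limits (d) per link.
  Constraint (b) is omitted, being satisfied by \<open>\<omega> = 0\<close> and \<open>v = Flow *v \<phi>\<close>.\<close>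
definition FRp_constraint_normal ::
  "real^'n^'n \<Rightarrow> real^'n^'l \<Rightarrow> ('n + 'n) + (('n + 'n) + ('l + 'l)) \<Rightarrow> (real^'n) \<times> (real^'n)" where
  "FRp_constraint_normal Lm Fm i = (case i of
      Inl (Inl n) \<Rightarrow> (axis n 1, 0) | Inl (Inr n) \<Rightarrow> (- axis n 1, 0)
    | Inr (Inl (Inl n)) \<Rightarrow> (axis n 1, - Lm$n) | Inr (Inl (Inr n)) \<Rightarrow> (- axis n 1, Lm$n)
    | Inr (Inr (Inl l)) \<Rightarrow> (0, - Fm$l) | Inr (Inr (Inr l)) \<Rightarrow> (0, Fm$l))"

definition FRp_constraint_bound ::
  "real^'n \<Rightarrow> real^'n \<Rightarrow> real^'n \<Rightarrow> real^'n \<Rightarrow> real^'l \<Rightarrow> ('n + 'n) + (('n + 'n) + ('l + 'l)) \<Rightarrow> real"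
  where
  "FRp_constraint_bound lo hi q k f i = (case i of
      Inl (Inl n) \<Rightarrow> lo$n - q$n | Inl (Inr n) \<Rightarrow> q$n - hi$n
    | Inr (Inl (Inl n)) \<Rightarrow> k$n | Inr (Inl (Inr n)) \<Rightarrow> - k$n
    | Inr (Inr (Inl l)) \<Rightarrow> - f$l | Inr (Inr (Inr l)) \<Rightarrow> - f$l)"

lemma FRp_constraints_iff:
  "(\<forall>i. FRp_constraint_bound lo hi q k f i \<le> FRp_constraint_normal Lm Fm i \<bullet> (r, \<phi>)) \<longleftrightarrow>
    (\<forall>n. lo$n \<le> q$n + r$n \<and> q$n + r$n \<le> hi$n) \<and> r - Lm *v \<phi> = k \<and>
    (\<forall>l. - f$l \<le> (Fm *v \<phi>)$l \<and> (Fm *v \<phi>)$l \<le> f$l)"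
  unfolding split_sum_all FRp_constraint_normal_def FRp_constraint_bound_def vec_eq_iff
  by (auto simp: inner_axis' matrix_vector_mul_component algebra_simps intro: antisym)

lemma sum_UNIV_Plus:
  "(\<Sum>i\<in>(UNIV::('a::finite + 'b::finite) set). f i) = (\<Sum>i\<in>UNIV. f (Inl i)) + (\<Sum>i\<in>UNIV. f (Inr i))"
  by (subst UNIV_Plus_UNIV[symmetric], subst sum.Plus) (auto simp: comp_def)

lemma sum_scaleR_axis: "(\<Sum>n\<in>UNIV. c n *\<^sub>R axis n (1::real)) = (\<chi> n. c n)"
  by (simp add: vec_eq_iff axis_def if_distrib[of "\<lambda>a. _ * a"] cong: if_cong)

lemma sum_scaleR_rows: "(\<Sum>n\<in>UNIV. c n *\<^sub>R (A::real^'m^'k)$n) = (\<chi> n. c n) v* A"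
  by (simp add: vec_eq_iff vector_matrix_mult_def mult.commute)

context FRp_optimum
begin

lemma FRp_linear_program_multipliers:
  obtains lm where "\<forall>i. 0 \<le> lm i"
    "\<forall>i. lm i * (FRp_constraint_normal Lap Flow i \<bullet> (r, \<phi>)
        - FRp_constraint_bound qlo qhi qp (d - qb - qp) f i) = 0"
    "((\<chi> n. deriv (c n) (qp$n + r$n)), 0) = (\<Sum>i\<in>UNIV. lm i *\<^sub>R FRp_constraint_normal Lap Flow i)"
proof -
  let ?a = "FRp_constraint_normal Lap Flow" and ?b = "FRp_constraint_bound qlo qhi qp (d - qb - qp) f"
  define G where "G = (\<chi> n. deriv (c n) (qp$n + r$n))"
  define J where "J = (\<lambda>x::(real^'n) \<times> (real^'n). gen_cost c qp (fst x))"
  have balance_iff: "r' - Lap *v \<phi>' = d - qb - qp \<longleftrightarrow> qb + qp + r' - d = Lap *v \<phi>'" for r' \<phi>'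
    by (auto simp: algebra_simps)
  have feas: "\<forall>i\<in>UNIV. ?b i \<le> ?a i \<bullet> (r, \<phi>)"
    using FRp_constraints_iff box balance flow_limits balance_iff unfolding box_ok_def by blast
  have opt: "\<forall>x. (\<forall>i\<in>UNIV. ?b i \<le> ?a i \<bullet> x) \<longrightarrow> J (r, \<phi>) \<le> J x"
  proof (intro allI impI)
    fix x :: "(real^'n) \<times> (real^'n)"
    assume "\<forall>i\<in>UNIV. ?b i \<le> ?a i \<bullet> x"
    moreover obtain r' \<phi>' where x: "x = (r', \<phi>')"
      by (cases x)
    ultimately have "(\<forall>n. qlo$n \<le> qp$n + r'$n \<and> qp$n + r'$n \<le> qhi$n) \<and>
        qb + qp + r' - d = Lap *v \<phi>' \<and> (\<forall>l. - f$l \<le> (Flow *v \<phi>')$l \<and> (Flow *v \<phi>')$l \<le> f$l)"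
      by (simp add: FRp_constraints_iff balance_iff)
    then have "FRp_feasible src dst B D f qlo qhi qb qp d r' 0 (Flow *v \<phi>') \<phi>'"
      unfolding FRp_feasible_def box_ok_def by (simp add: laplacian_mult)
    then have "FRp_obj c D qp r \<omega> \<le> FRp_obj c D qp r' 0"
      using optimal unfolding FRp_optimal_def by blast
    then show "J (r, \<phi>) \<le> J x"
      unfolding J_def x using frequency_zero by (simp add: FRp_obj_eq)
  qed
  have "((\<lambda>t. J ((r, \<phi>) + t *\<^sub>R (dr, d\<phi>))) has_real_derivative ((G, 0) \<bullet> (dr, d\<phi>))) (at 0)"
    for dr d\<phi>
  proof -
    have "((\<lambda>t. c n (qp$n + (r$n + t * dr$n))) has_real_derivative G$n * dr$n) (at 0)" for n
    proof -
      have "(c n has_real_derivative G$n) (at ((\<lambda>t. qp$n + (r$n + t * dr$n)) 0))"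
        unfolding G_def using C1_differentiable_on_UNIV_has_derivative cost_C1 by simp
      moreover have "((\<lambda>t. qp$n + (r$n + t * dr$n)) has_real_derivative dr$n) (at 0)"
        by (auto intro!: derivative_eq_intros)
      ultimately show ?thesis
        by (rule DERIV_chain2)
    qed
    then show ?thesis
      unfolding J_def gen_cost_def by (auto intro!: DERIV_sum simp: inner_vec_def)
  qed
  then have der: "\<forall>dd. ((\<lambda>t. J ((r, \<phi>) + t *\<^sub>R dd)) has_real_derivative ((G, 0) \<bullet> dd)) (at 0)"
    by simp
  show ?thesis
    using linear_constraints_kkt[OF finite feas opt der] that unfolding G_def by auto
qed

lemma kkt_exists: "\<exists>\<pi> mulow mubar. kkt \<pi> mulow mubar"
proof -
  let ?a = "FRp_constraint_normal Lap Flow"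
  obtain lm where lm0: "\<forall>i. 0 \<le> lm i"
    and cs: "\<forall>i. lm i * (?a i \<bullet> (r, \<phi>) - FRp_constraint_bound qlo qhi qp (d - qb - qp) f i) = 0"
    and grad: "((\<chi> n. deriv (c n) (qp$n + r$n)), 0) = (\<Sum>i\<in>UNIV. lm i *\<^sub>R ?a i)"
    by (rule FRp_linear_program_multipliers)
  define \<pi> where "\<pi> = (\<chi> n. lm (Inr (Inl (Inr n))) - lm (Inr (Inl (Inl n))))"
  define mubar where "mubar = (\<chi> l. lm (Inr (Inr (Inl l))))"
  define mulow where "mulow = (\<chi> l. lm (Inr (Inr (Inr l))))"
  have "fst (\<Sum>i\<in>UNIV. lm i *\<^sub>R ?a i)
      = (\<Sum>n\<in>UNIV. (lm (Inl (Inl n)) - lm (Inl (Inr n)) - \<pi>$n) *\<^sub>R axis n 1)"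
    by (simp add: fst_sum sum_UNIV_Plus FRp_constraint_normal_def \<pi>_def scaleR_diff_left
        scaleR_add_left sum.distrib sum_subtractf sum_negf)
  then have "(\<chi> n. deriv (c n) (qp$n + r$n)) = (\<chi> n. lm (Inl (Inl n)) - lm (Inl (Inr n)) - \<pi>$n)"
    using arg_cong[OF grad, of fst] by (simp add: sum_scaleR_axis)
  then have deriv_eq: "deriv (c n) (qp$n + r$n) = lm (Inl (Inl n)) - lm (Inl (Inr n)) - \<pi>$n" for n
    by (simp add: vec_eq_iff)
  have "0 = \<pi> v* Lap - (mubar - mulow) v* Flow"
    using arg_cong[OF grad, of snd]
    by (simp add: snd_sum sum_UNIV_Plus FRp_constraint_normal_def \<pi>_def mubar_def mulow_def
        scaleR_diff_left sum.distrib sum_subtractf sum_negf sum_scaleR_rows[symmetric] algebra_simps)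
  then have stationary: "Lap *v \<pi> = (Inc ** diag_mat B) *v (mubar - mulow)"
    by (metis eq_iff_diff_eq_0 transpose_incidence_diag_mat transpose_laplacian transpose_matrix_vector
        transpose_transpose)
  have slack: "mubar$l * ((Flow *v \<phi>)$l - f$l) = 0" "mulow$l * (- f$l - (Flow *v \<phi>)$l) = 0" for l
    using cs[rule_format, of "Inr (Inr (Inl l))"] cs[rule_format, of "Inr (Inr (Inr l))"]
    unfolding mubar_def mulow_def
    by (auto simp: FRp_constraint_normal_def FRp_constraint_bound_def matrix_vector_mul_component
        algebra_simps)
  then have CS: "mubar \<bullet> (Flow *v \<phi> - f) = 0" "mulow \<bullet> (- f - Flow *v \<phi>) = 0"
    by (simp_all add: inner_vec_def slack)
  have "c n (qp$n + r$n) + \<pi>$n * r$n \<le> c n (qp$n + t) + \<pi>$n * t"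
    if "t \<in> {qlo$n - qp$n..qhi$n - qp$n}" for n t
  proof (rule convex_interval_multipliers_imp_min[OF _ _ _ _ _ _ that])
    show "convex_on UNIV (c n)"
      using cost_strict_convex strictly_convex_imp_convex_on by blast
    show "(c n has_real_derivative lm (Inl (Inl n)) - lm (Inl (Inr n)) - \<pi>$n) (at (qp$n + r$n))"
      using C1_differentiable_on_UNIV_has_derivative cost_C1 deriv_eq by metis
    show "lm (Inl (Inl n)) * (r$n - (qlo$n - qp$n)) = 0" "lm (Inl (Inr n)) * (qhi$n - qp$n - r$n) = 0"
      using cs[rule_format, of "Inl (Inl n)"] cs[rule_format, of "Inl (Inr n)"]
      by (simp_all add: FRp_constraint_normal_def FRp_constraint_bound_def inner_axis' algebra_simps)
  qed (use lm0 in auto)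
  moreover have "dual_feasible mulow mubar"
    unfolding dual_feasible_def mulow_def mubar_def using lm0 by simp
  ultimately show ?thesis
    unfolding kkt_def using stationary CS by blast
qed

lemma FRp_primal_dual_optimal_iff_kkt:
  "FRp_primal_dual_optimal c src dst B D f qlo qhi qb qp d r \<omega> v \<phi> \<pi> mulow mubar
     \<longleftrightarrow> kkt \<pi> mulow mubar"
proof
  assume pd: "FRp_primal_dual_optimal c src dst B D f qlo qhi qb qp d r \<omega> v \<phi> \<pi> mulow mubar"
  obtain \<pi>' mulow' mubar' where kkt': "kkt \<pi>' mulow' mubar'"
    using kkt_exists by blast
  then have "dual_feasible mulow' mubar'"
    unfolding kkt_def by blast
  then have "FRp_dual c src dst B D f qlo qhi qb qp d 0 \<pi>' mulow' mubar'
      \<le> FRp_dual c src dst B D f qlo qhi qb qp d 0 \<pi> mulow mubar"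
    using pd unfolding FRp_primal_dual_optimal_def frequency_zero by blast
  then have "ereal opt_cost \<le> FRp_dual c src dst B D f qlo qhi qb qp d 0 \<pi> mulow mubar"
    using kkt_imp_opt_cost_le_FRp_dual[OF kkt'] by (rule order_trans[rotated])
  then show "kkt \<pi> mulow mubar"
    using pd opt_cost_le_FRp_dual_imp_kkt unfolding FRp_primal_dual_optimal_def by blast
next
  assume "kkt \<pi> mulow mubar"
  then show "FRp_primal_dual_optimal c src dst B D f qlo qhi qb qp d r \<omega> v \<phi> \<pi> mulow mubar"
    using FRp_dual_le_opt_cost kkt_imp_opt_cost_le_FRp_dual optimal frequency_zero
    unfolding FRp_primal_dual_optimal_def kkt_def by (blast intro: order_trans)
qed

lemma control_law_iff_coordinate_min:
  "r = control_law c qlo qhi qp \<omega> \<pi> \<longleftrightarrow>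
   (\<forall>n. \<forall>t\<in>{qlo$n - qp$n..qhi$n - qp$n}. c n (qp$n + r$n) + \<pi>$n * r$n \<le> c n (qp$n + t) + \<pi>$n * t)"
proof -
  have "qlo$n \<le> qhi$n" for n
    using box unfolding box_ok_def by (meson order_trans)
  then have "r$n = clamp (qlo$n - qp$n) (qhi$n - qp$n) (inv (deriv (c n)) (- \<pi>$n) - qp$n) \<longleftrightarrow>
      (\<forall>t\<in>{qlo$n - qp$n..qhi$n - qp$n}. c n (qp$n + r$n) + \<pi>$n * r$n \<le> c n (qp$n + t) + \<pi>$n * t)" for n
    using argmin_interval_eq_clamp_inv_deriv[of "c n" "qlo$n" "qhi$n" "r$n" "qp$n" "\<pi>$n"]
      cost_strict_convex cost_C1 cost_deriv_surj dispatch_mem_box[of n] by auto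
  then show ?thesis
    unfolding control_law_def frequency_zero by (simp add: vec_eq_iff)
qed

text \<open>With \<open>\<theta> = \<phi>\<close> the frequency and \<open>\<pi>\<close> dynamics rest by (c); the projected \<open>\<mu>\<close> dynamics rest
  exactly under complementary slackness.\<close>
lemma cl_equilibrium_iff_kkt:
  assumes "\<forall>n. 0 < zeta_pi$n \<and> 0 < chi_phi$n" "\<forall>l. 0 < zeta_mubar$l \<and> 0 < zeta_mulow$l"
  shows "cl_equilibrium c src dst B D M f qlo qhi zeta_pi chi_phi zeta_mubar zeta_mulow qb qp d
           r \<omega> \<phi> \<phi> \<pi> mulow mubar \<longleftrightarrow> kkt \<pi> mulow mubar"
proof -
  have "(\<chi> n. (qb + qp + r - d - diag_mat D *v \<omega> - Lap *v \<phi>)$n / M$n) = 0"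
    and "diag_mat zeta_pi *v (qb + qp + r - d - Lap *v \<phi>) = 0"
    using balance frequency_zero by (simp_all add: vec_eq_iff diag_mat_vector_mult)
  moreover have "diag_mat chi_phi *v (Lap *v \<pi> - (Inc ** diag_mat B) *v (mubar - mulow)) = 0
      \<longleftrightarrow> Lap *v \<pi> = (Inc ** diag_mat B) *v (mubar - mulow)"
    using assms(1) diag_mat_vector_mult_eq_0_iff[of chi_phi] by simp
  moreover have "diag_mat zeta_mubar *v proj_plus mubar (Flow *v \<phi> - f) = 0
      \<longleftrightarrow> mubar \<bullet> (Flow *v \<phi> - f) = 0"
    and "diag_mat zeta_mulow *v proj_plus mulow (- f - Flow *v \<phi>) = 0
      \<longleftrightarrow> mulow \<bullet> (- f - Flow *v \<phi>) = 0"
    if "dual_feasible mulow mubar"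
    using assms(2) diag_mat_vector_mult_eq_0_iff[of zeta_mubar] diag_mat_vector_mult_eq_0_iff[of zeta_mulow]
      proj_plus_eq_0_iff[of mubar "Flow *v \<phi> - f"] proj_plus_eq_0_iff[of mulow "- f - Flow *v \<phi>"]
      that flow_limits unfolding dual_feasible_def by (simp_all add: algebra_simps)
  ultimately show ?thesis
    unfolding cl_equilibrium_def kkt_def control_law_iff_coordinate_min[symmetric]
    using frequency_zero by blast
qed

end

theorem proposition1:
  fixes src dst :: "'l::finite \<Rightarrow> 'n::finite"
    and B f zeta_mubar zeta_mulow :: "real^'l"
    and D M qlo qhi zeta_pi chi_phi :: "real^'n"
    and c :: "'n \<Rightarrow> real \<Rightarrow> real"
    and qb qp d r r' \<omega>' \<phi>' :: "real^'n"
    and v' :: "real^'l"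
  assumes no_loops: "\<forall>l. src l \<noteq> dst l"
    and connected: "graph_connected src dst"
    and B_pos: "\<forall>l. 0 < B$l"
    and D_pos: "\<forall>n. 0 < D$n"
    and M_pos: "\<forall>n. 0 < M$n"
    and gains_pos: "\<forall>n. 0 < zeta_pi$n \<and> 0 < chi_phi$n"
                   "\<forall>l. 0 < zeta_mubar$l \<and> 0 < zeta_mulow$l"
    and cost_strict_convex: "\<forall>n. strictly_convex (c n)"
    and cost_C1: "\<forall>n. c n C1_differentiable_on UNIV"
    and cost_deriv_invertible: "\<forall>n. surj (deriv (c n))"
    and FR_opt: "FR_optimal c src dst B f qlo qhi qb qp d r"
    and FRp_opt: "FRp_optimal c src dst B D f qlo qhi qb qp d r' \<omega>' v' \<phi>'"
  shows "\<omega>' = 0 \<and> r = r' \<and>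
         ptdf src dst B *v (qb + qp + r - d) = flowmat src dst B *v \<phi>' \<and>
         (\<exists>\<theta>' y'. incidence src dst *v y' = 0 \<and>
             v' = flowmat src dst B *v \<theta>' + y' \<and>
             flowmat src dst B *v \<phi>' = flowmat src dst B *v \<theta>' \<and>
             (\<forall>\<pi>' mulow' mubar'.
                cl_equilibrium c src dst B D M f qlo qhi zeta_pi chi_phi zeta_mubar zeta_mulow
                  qb qp d r' \<omega>' \<theta>' \<phi>' \<pi>' mulow' mubar'
                \<longleftrightarrow> FRp_primal_dual_optimal c src dst B D f qlo qhi qb qp d
                  r' \<omega>' v' \<phi>' \<pi>' mulow' mubar'))"
proof -
  interpret FRp_optimum src dst B c D qlo qhi qb qp d r' \<omega>' \<phi>' f v'
    using assms by unfold_locales auto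
  have r'_FR: "FR_feasible src dst B f qlo qhi qb qp d r'"
    and flow: "ptdf src dst B *v (qb + qp + r' - d) = Flow *v \<phi>'"
    using FRp_feasible_imp_FR_feasible[OF feasible] by blast+
  have "FRp_obj c D qp r' \<omega>' \<le> FRp_obj c D qp r 0"
    using optimal FR_feasible_imp_FRp_feasible[of f qlo qhi qb qp d r D] FR_opt
    unfolding FRp_optimal_def FR_optimal_def by blast
  then have "r' = r"
    using FR_optimal_unique[OF cost_strict_convex FR_opt r'_FR] frequency_zero
    by (simp add: FRp_obj_eq)
  moreover have "Inc *v (v' - Flow *v \<phi>') = 0"
    using nodal_balance balance frequency_zero
    by (simp add: matrix_vector_mult_diff_distrib laplacian_mult)
  ultimately show ?thesis
    using flow frequency_zero cl_equilibrium_iff_kkt[OF gains_pos] FRp_primal_dual_optimal_iff_kkt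
    by (intro conjI exI[of _ \<phi>'] exI[of _ "v' - Flow *v \<phi>'"]) auto
qed

end
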